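(* Let $M=\mathbb{R}/\mathbb{Z}$ with Lebesgue measure $m$, let $f_0:M\to M$ be a $C^2$ local diffeomorphism with a unique saddle-node fixed point $0$ ($f_0(0)=0$, $f_0'(0)=1$, $f_0''(0)>0$), let $B(\{0\})=\{x\in M: f_0^k(x)\to0 \text{ as } k\to\infty\}$, let $W_0$ be the connected component of $B(\{0\})$ containing $0$, and assume $|f_0'(x)|>1$ for all $x\in M\setminus W_0$. Then $m(M\setminus B(\{0\}))=0$. *)

theory Defs
  imports "HOL-Analysis.Analysis"
begin

text \<open>The circle M = R/Z is handled through lifts: a circle map f is represented by a
lift F : R -> R with F(x+1) = F(x) + d, d an integer (the degree). A point of M is
represented by any real representative.\<close>

text \<open>Distance in M = R/Z from the class of x to the point 0, i.e. distance to the
nearest integer.\<close>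
definition circ_dist0 :: "real \<Rightarrow> real" where
  "circ_dist0 x = \<bar>x - of_int (round x)\<bar>"

definition basin0_lift :: "(real \<Rightarrow> real) \<Rightarrow> real set" where
  "basin0_lift F = {x. (\<lambda>k. circ_dist0 ((F ^^ k) x)) \<longlonglongrightarrow> 0}"

definition W0_lift :: "(real \<Rightarrow> real) \<Rightarrow> real set" where
  "W0_lift F = connected_component_set (basin0_lift F) 0"

end

theory Submission
  imports Defs
begin

text \<open>Work with the lift \<open>G = F - F 0\<close>: it is increasing, fixes \<open>0\<close> and satisfies
  \<open>G (x + 1) = G x + d\<close>. At the saddle-node, \<open>G z > z\<close> on both sides of \<open>0\<close>, so points just left of
  \<open>0\<close> are attracted and points to the right are pushed away; with the expansion hypothesis this
  forces \<open>W0 = {p<..0}\<close> for some \<open>-1 < p < 0\<close>. The points whose orbit enters an integer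
  translate of \<open>{p<..0}\<close> form an open, dense, \<open>1\<close>-periodic subset of the basin. Around a point whose
  orbit never enters it, pull back a window of fixed size from a return time to the region where
  \<open>f \<ge> lam > 1\<close>. The total length of the intermediate images is bounded: it grows geometrically
  between returns, while each slow excursion past the saddle-node contributes at most a constant
  times the length at its end. Hence the distortion is bounded, the trapped set occupies a fixed
  proportion of arbitrarily small intervals around the point, and a Vitali covering argument
  shows that the complement of the trapped set is null.\<close>

section \<open>Lebesgue density and change of variables\<close>

lemma emeasure_inter_disjoint_balls_le:
  fixes A :: "real set" and C :: "'i set"
  assumes A: "A \<in> sets borel" and C: "countable C"
    and disj: "disjoint_family_on (\<lambda>i. ball (c i) (r i)) C"
    and density: "\<And>i. i \<in> C \<Longrightarrow>
      emeasure lborel (A \<inter> ball (c i) (r i)) \<le> ennreal \<theta> * emeasure lborel (ball (c i) (r i))"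
  shows "emeasure lborel (A \<inter> (\<Union>i\<in>C. ball (c i) (r i)))
    \<le> ennreal \<theta> * emeasure lborel (\<Union>i\<in>C. ball (c i) (r i))"
proof -
  have disjA: "disjoint_family_on (\<lambda>i. A \<inter> ball (c i) (r i)) C"
    using disj unfolding disjoint_family_on_def by blast
  have "A \<inter> (\<Union>i\<in>C. ball (c i) (r i)) = (\<Union>i\<in>C. A \<inter> ball (c i) (r i))" by blast
  also have "emeasure lborel \<dots> = (\<integral>\<^sup>+i. emeasure lborel (A \<inter> ball (c i) (r i)) \<partial>count_space C)"
    by (rule emeasure_UN_countable) (use A C disjA in auto)
  also have "\<dots> \<le> (\<integral>\<^sup>+i. ennreal \<theta> * emeasure lborel (ball (c i) (r i)) \<partial>count_space C)"
    by (rule nn_integral_mono) (use density in simp)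
  also have "\<dots> = ennreal \<theta> * (\<integral>\<^sup>+i. emeasure lborel (ball (c i) (r i)) \<partial>count_space C)"
    by (rule nn_integral_cmult) simp
  also have "(\<integral>\<^sup>+i. emeasure lborel (ball (c i) (r i)) \<partial>count_space C)
      = emeasure lborel (\<Union>i\<in>C. ball (c i) (r i))"
    by (rule emeasure_UN_countable[symmetric]) (use C disj in auto)
  finally show ?thesis .
qed

lemma emeasure_le_density_cover:
  fixes A Z V :: "real set" and \<theta> :: real
  assumes A: "A \<in> sets borel" and Z: "countable Z" and V: "open V" "A \<subseteq> V"
    and density: "\<And>x r0. x \<in> A \<Longrightarrow> x \<notin> Z \<Longrightarrow> 0 < r0 \<Longrightarrow>
       \<exists>r. 0 < r \<and> r < r0 \<and> emeasure lborel (A \<inter> ball x r) \<le> ennreal \<theta> * emeasure lborel (ball x r)"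
  shows "emeasure lborel A \<le> ennreal \<theta> * emeasure lborel V"
proof -
  have Zn: "Z \<in> null_sets lborel" using Z by (rule countable_imp_null_set_lborel)
  define S where "S = A - Z"
  define K where "K = {(y, \<rho>). y \<in> S \<and> 0 < \<rho> \<and> ball y \<rho> \<subseteq> V \<and>
      emeasure lborel (A \<inter> ball y \<rho>) \<le> ennreal \<theta> * emeasure lborel (ball y \<rho>)}"
  have "\<exists>i. i \<in> K \<and> y \<in> ball (fst i) (snd i) \<and> snd i < e" if y: "y \<in> S" and e: "0 < e" for y e
  proof -
    have "y \<in> V" using y V by (auto simp: S_def)
    then obtain k where k: "k > 0" "ball y k \<subseteq> V" using V(1) openE by blast
    obtain r where r: "0 < r" "r < min e k"
        "emeasure lborel (A \<inter> ball y r) \<le> ennreal \<theta> * emeasure lborel (ball y r)"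
      using density[of y "min e k"] y e k by (auto simp: S_def)
    then have "(y, r) \<in> K" using y k by (auto simp: K_def)
    then show ?thesis using r by (intro exI[of _ "(y, r)"]) auto
  qed
  then obtain C where C: "countable C" "C \<subseteq> K"
      "pairwise (\<lambda>i j. disjnt (ball (fst i) (snd i)) (ball (fst j) (snd j))) C"
      "negligible (S - (\<Union>i\<in>C. ball (fst i) (snd i)))"
    using Vitali_covering_theorem_balls[of S K fst snd] by blast
  define U where "U = (\<Union>i\<in>C. ball (fst i) (snd i))"
  have U: "U \<in> sets borel" unfolding U_def by (intro borel_open open_UN) auto
  have "S - U \<in> null_sets lebesgue" using C(4) by (simp add: U_def negligible_iff_null_sets)
  then have SU: "S - U \<in> null_sets lborel"
    using A U Zn by (auto simp: S_def null_sets_completion_iff)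
  have "emeasure lborel A \<le> emeasure lborel ((A \<inter> U) \<union> ((S - U) \<union> Z))"
    by (rule emeasure_mono) (use A U Zn SU in \<open>auto simp: S_def\<close>)
  also have "\<dots> = emeasure lborel (A \<inter> U)"
    by (rule emeasure_Un_null_set) (use A U SU Zn in auto)
  also have "\<dots> \<le> ennreal \<theta> * emeasure lborel U"
    unfolding U_def using A C(1,2,3)
    by (intro emeasure_inter_disjoint_balls_le)
      (auto simp: K_def disjoint_family_on_def pairwise_def disjnt_def)
  also have "\<dots> \<le> ennreal \<theta> * emeasure lborel V"
    using C(2) V(1) by (intro mult_left_mono emeasure_mono) (force simp: U_def K_def)+
  finally show ?thesis .
qed

lemma null_sets_lborel_if_density_lt_1_finite:
  fixes A Z :: "real set" and \<theta> :: real
  assumes A: "A \<in> sets borel" "emeasure lborel A < \<infinity>"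
    and Z: "countable Z" and \<theta>: "0 \<le> \<theta>" "\<theta> < 1"
    and density: "\<And>x r0. x \<in> A \<Longrightarrow> x \<notin> Z \<Longrightarrow> 0 < r0 \<Longrightarrow>
       \<exists>r. 0 < r \<and> r < r0 \<and> emeasure lborel (A \<inter> ball x r) \<le> ennreal \<theta> * emeasure lborel (ball x r)"
  shows "A \<in> null_sets lborel"
proof -
  have "emeasure lborel A \<noteq> top" using A(2) by simp
  then have A_fin: "emeasure lborel A = ennreal (measure lborel A)"
    by (rule emeasure_eq_ennreal_measure)
  have shrink: "measure lborel A * (1 - \<theta>) \<le> \<theta> * \<delta>" if \<delta>: "\<delta> > 0" for \<delta>
  proof -
    obtain V where V: "open V" "A \<subseteq> V" "emeasure lborel (V - A) < \<delta>"
      using outer_regular_lborel[OF A(1) \<delta>] by blast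
    have "emeasure lborel A \<le> ennreal \<theta> * emeasure lborel V"
      by (rule emeasure_le_density_cover[OF A(1) Z V(1,2) density])
    also have "emeasure lborel V \<le> emeasure lborel (A \<union> (V - A))"
      using A V(1) by (intro emeasure_mono) auto
    also have "\<dots> \<le> emeasure lborel A + emeasure lborel (V - A)"
      using A V(1) by (intro emeasure_subadditive) auto
    also have "\<dots> \<le> ennreal (measure lborel A) + ennreal \<delta>"
      unfolding A_fin using V(3) by (intro add_left_mono) simp
    finally have "ennreal (measure lborel A) \<le> ennreal \<theta> * (ennreal (measure lborel A) + ennreal \<delta>)"
      using A_fin by (simp add: mult_left_mono)
    also have "\<dots> = ennreal (\<theta> * (measure lborel A + \<delta>))"
      using \<theta> \<delta> by (simp add: ennreal_mult ennreal_plus)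
    finally have "measure lborel A \<le> \<theta> * (measure lborel A + \<delta>)"
      using \<theta> \<delta> by (simp add: ennreal_le_iff)
    then show ?thesis by (simp add: algebra_simps)
  qed
  have "measure lborel A * (1 - \<theta>) \<le> 0"
  proof (rule field_le_epsilon)
    fix e :: real assume e: "0 < e"
    have "measure lborel A * (1 - \<theta>) \<le> \<theta> * e" using shrink[OF e] .
    also have "\<dots> \<le> e" using \<theta> e by (simp add: mult_le_cancel_right1)
    finally show "measure lborel A * (1 - \<theta>) \<le> 0 + e" by simp
  qed
  then have "measure lborel A = 0" using \<theta> by (simp add: mult_le_0_iff measure_le_0_iff)
  then show ?thesis using A A_fin by (simp add: null_sets_def)
qed

lemma null_sets_lborel_if_density_lt_1:
  fixes A Z :: "real set" and \<theta> :: real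
  assumes A: "A \<in> sets borel" and Z: "countable Z" and \<theta>: "0 \<le> \<theta>" "\<theta> < 1"
    and density: "\<And>x r0. x \<in> A \<Longrightarrow> x \<notin> Z \<Longrightarrow> 0 < r0 \<Longrightarrow>
       \<exists>r. 0 < r \<and> r < r0 \<and> emeasure lborel (A \<inter> ball x r) \<le> ennreal \<theta> * emeasure lborel (ball x r)"
  shows "A \<in> null_sets lborel"
proof -
  have "A \<inter> ball 0 (real N) \<in> null_sets lborel" for N :: nat
  proof (rule null_sets_lborel_if_density_lt_1_finite[OF _ _ Z \<theta>])
    show "A \<inter> ball 0 (real N) \<in> sets borel" using A by simp
    have "emeasure lborel (A \<inter> ball 0 (real N)) \<le> emeasure lborel (ball (0::real) (real N))"
      by (rule emeasure_mono) auto
    also have "\<dots> < \<infinity>" by (simp add: ball_eq_greaterThanLessThan)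
    finally show "emeasure lborel (A \<inter> ball 0 (real N)) < \<infinity>" .
    fix x r0 :: real assume x: "x \<in> A \<inter> ball 0 (real N)" "x \<notin> Z" and r0: "0 < r0"
    then obtain r where r: "0 < r" "r < r0"
        "emeasure lborel (A \<inter> ball x r) \<le> ennreal \<theta> * emeasure lborel (ball x r)"
      using density by blast
    moreover have "emeasure lborel (A \<inter> ball 0 (real N) \<inter> ball x r) \<le> emeasure lborel (A \<inter> ball x r)"
      using A by (intro emeasure_mono) auto
    ultimately show "\<exists>r. 0 < r \<and> r < r0 \<and> emeasure lborel (A \<inter> ball 0 (real N) \<inter> ball x r)
        \<le> ennreal \<theta> * emeasure lborel (ball x r)"
      by (meson order_trans)
  qed
  then have "(\<Union>N. A \<inter> ball 0 (real N)) \<in> null_sets lborel" by (rule null_sets_UN)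
  also have "(\<Union>N. A \<inter> ball 0 (real N)) = A"
    by (auto simp: dist_real_def intro: reals_Archimedean2)
  finally show ?thesis .
qed

lemma emeasure_interval_preimage_le:
  fixes g g' :: "real \<Rightarrow> real"
  assumes ab: "a \<le> b" and S: "S \<in> sets borel"
    and deriv: "\<And>x. (g has_real_derivative g' x) (at x)" and cont: "\<And>x. isCont g' x"
    and pos: "\<And>x. 0 \<le> g' x"
    and preimage: "\<And>t. g t \<in> S \<Longrightarrow> t \<in> S"
    and bound: "\<And>t. a \<le> t \<Longrightarrow> t \<le> b \<Longrightarrow> g' t \<le> K"
  shows "emeasure lborel (S \<inter> {g a..g b}) \<le> ennreal K * emeasure lborel (S \<inter> {a..b})"
proof -
  have "set_borel_measurable borel {g a..g b} (indicator S :: real \<Rightarrow> real)"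
    unfolding set_borel_measurable_def using S by measurable
  then have "(\<integral>\<^sup>+y. ennreal (indicator S y * indicator {g a..g b} y) \<partial>lborel)
      = (\<integral>\<^sup>+x. ennreal (indicator S (g x) * g' x * indicator {a..b} x) \<partial>lborel)"
    using ab deriv cont pos by (intro nn_integral_substitution) (auto simp: continuous_at_imp_continuous_on)
  moreover have "emeasure lborel (S \<inter> {g a..g b}) = (\<integral>\<^sup>+y. indicator (S \<inter> {g a..g b}) y \<partial>lborel)"
    using S by simp
  moreover have "\<dots> = (\<integral>\<^sup>+y. ennreal (indicator S y * indicator {g a..g b} y) \<partial>lborel)"
    by (intro nn_integral_cong) (auto split: split_indicator)
  ultimately have "emeasure lborel (S \<inter> {g a..g b}) = (\<integral>\<^sup>+x. ennreal (indicator S (g x) * g' x * indicator {a..b} x) \<partial>lborel)"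
    by simp
  also have "\<dots> \<le> (\<integral>\<^sup>+x. ennreal K * indicator (S \<inter> {a..b}) x \<partial>lborel)"
    using preimage bound by (intro nn_integral_mono) (auto simp: indicator_def ennreal_leI)
  also have "\<dots> = ennreal K * emeasure lborel (S \<inter> {a..b})"
    using S by (simp add: nn_integral_cmult_indicator)
  finally show ?thesis .
qed

lemma emeasure_compl_ball_le:
  fixes T :: "real set"
  assumes ab: "a < x" "x < b" and T: "T \<in> sets borel"
    and c: "c * (b - a) \<le> measure lborel (T \<inter> {a..b})"
  shows "emeasure lborel (- T \<inter> ball x (2 * (b - a)))
    \<le> ennreal (1 - c / 4) * emeasure lborel (ball x (2 * (b - a)))"
proof -
  define r S where "r = 2 * (b - a)" and "S = T \<inter> {a..b}"
  have r: "0 < r" using ab by (simp add: r_def)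
  have S: "S \<in> sets borel" "S \<subseteq> ball x r" using T ab by (auto simp: S_def r_def dist_real_def)
  have S_le: "emeasure lborel S \<le> ennreal (b - a)"
    using emeasure_mono[of S "{a..b}" lborel] ab by (auto simp: S_def)
  then have "emeasure lborel S \<noteq> top" by (metis ennreal_neq_top top_unique)
  then have S_fin: "emeasure lborel S = ennreal (measure lborel S)"
    by (rule emeasure_eq_ennreal_measure)
  then have "measure lborel S \<le> b - a" using S_le ab by simp
  then have "c * (b - a) \<le> b - a" using c by (simp add: S_def)
  then have "c \<le> 1" using ab by (simp add: mult_le_cancel_right1)
  have ball: "emeasure lborel (ball x r) = ennreal (2 * r)"
    using r by (simp add: ball_eq_greaterThanLessThan)
  have "emeasure lborel (- T \<inter> ball x r) \<le> emeasure lborel (ball x r - S)"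
    by (rule emeasure_mono) (use S in \<open>auto simp: S_def\<close>)
  also have "\<dots> = emeasure lborel (ball x r) - emeasure lborel S"
    by (rule emeasure_Diff) (use S S_fin in auto)
  also have "\<dots> = ennreal (2 * r - measure lborel S)"
    using ball S_fin by (simp add: ennreal_minus)
  also have "\<dots> \<le> ennreal ((1 - c / 4) * (2 * r))"
    using c by (intro ennreal_leI) (simp add: r_def S_def algebra_simps)
  also have "\<dots> = ennreal (1 - c / 4) * emeasure lborel (ball x r)"
    using ball \<open>c \<le> 1\<close> r by (simp add: ennreal_mult)
  finally show ?thesis by (simp add: r_def)
qed

section \<open>Lifts of circle maps\<close>

lemma lift_add_of_int:
  fixes h :: "real \<Rightarrow> real"
  assumes lift: "\<And>x. h (x + 1) = h x + c"
  shows "h (x + of_int m) = h x + of_int m * c"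
proof (induction m rule: int_induct[where k = 0])
  case (step1 i)
  have "h (x + of_int (i + 1)) = h ((x + of_int i) + 1)" by (simp add: add.assoc)
  also have "\<dots> = h (x + of_int i) + c" by (rule lift)
  finally show ?case using step1 by (simp add: algebra_simps)
next
  case (step2 i)
  have "h (x + of_int i) = h ((x + of_int (i - 1)) + 1)" by simp
  also have "\<dots> = h (x + of_int (i - 1)) + c" by (rule lift)
  finally show ?case using step2 by (simp add: algebra_simps)
qed simp

lemma periodic_frac:
  fixes h :: "real \<Rightarrow> real"
  assumes "\<And>x. h (x + 1) = h x"
  shows "h (frac x) = h x"
  using lift_add_of_int[of h 0 "frac x" "\<lfloor>x\<rfloor>"] assms by (simp add: frac_def)

lemma derivative_of_lift_periodic:
  fixes h h' :: "real \<Rightarrow> real"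
  assumes lift: "\<And>x. h (x + 1) = h x + c" and deriv: "\<And>x. (h has_real_derivative h' x) (at x)"
  shows "h' (x + 1) = h' x"
proof -
  have "((\<lambda>x. h (x + 1)) has_real_derivative h' (x + 1) * 1) (at x)"
    by (rule DERIV_chain2[OF deriv]) (auto intro!: derivative_eq_intros)
  moreover have "((\<lambda>x. h (x + 1)) has_real_derivative h' x) (at x)"
    unfolding lift using deriv by (auto intro!: derivative_eq_intros)
  ultimately show ?thesis using DERIV_unique by fastforce
qed

lemma periodic_attains_min:
  fixes h :: "real \<Rightarrow> real"
  assumes periodic: "\<And>x. h (x + 1) = h x" and cont: "\<And>x. isCont h x"
  obtains z where "\<And>x. h z \<le> h x"
proof -
  obtain z where "\<forall>y\<in>{0..1}. h z \<le> h y"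
    using continuous_attains_inf[of "{0..1::real}" h] cont
    by (auto simp: continuous_at_imp_continuous_on)
  then have "h z \<le> h (frac x)" for x
    by (meson atLeastAtMost_iff frac_ge_0 frac_lt_1 less_imp_le)
  then have "h z \<le> h x" for x
    using periodic_frac[of h x, OF periodic] by metis
  then show ?thesis using that by blast
qed

lemma funpow_add_apply: "(g ^^ m) ((g ^^ n) x) = (g ^^ (m + n)) x"
  by (simp add: funpow_add)

lemma notin_Ints_between:
  assumes "of_int m < x" "x < of_int m + (1::real)"
  shows "x \<notin> \<int>"
proof
  assume "x \<in> \<int>"
  then obtain k where "x = of_int k" by (rule Ints_cases)
  with assms have "m < k" "k < m + 1" by simp_all
  then show False by simp
qed

lemma round_add_of_int: "round (z + of_int m :: real) = round z + m"
proof -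
  have "\<lfloor>z + of_int m + 1/2\<rfloor> = \<lfloor>(z + 1/2) + of_int m\<rfloor>" by (simp add: algebra_simps)
  then show ?thesis by (simp add: round_def)
qed

lemma circ_dist0_add_of_int: "circ_dist0 (z + of_int m) = circ_dist0 z"
  unfolding circ_dist0_def by (simp add: round_add_of_int)

lemma circ_dist0_of_int: "circ_dist0 (of_int m) = 0"
  by (simp add: circ_dist0_def)

lemma circ_dist0_le_abs: "circ_dist0 z \<le> \<bar>z\<bar>"
  using round_diff_minimal[of z 0] by (simp add: circ_dist0_def)

lemma circ_dist0_pos:
  assumes "z \<notin> \<int>"
  shows "0 < circ_dist0 z"
proof -
  have "z \<noteq> of_int (round z)" using assms by (metis Ints_of_int)
  then show ?thesis by (simp add: circ_dist0_def)
qed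

lemma basin0_lift_borel:
  fixes F :: "real \<Rightarrow> real"
  assumes "continuous_on UNIV F"
  shows "basin0_lift F \<in> sets borel"
proof -
  have "circ_dist0 \<in> borel_measurable borel"
    unfolding circ_dist0_def round_def by measurable
  moreover have "continuous_on UNIV (F ^^ k)" for k
  proof (induction k)
    case (Suc k)
    have "continuous_on UNIV (\<lambda>x. F ((F ^^ k) x))"
      by (rule continuous_on_compose2[OF assms Suc]) simp
    then show ?case by (simp add: comp_def)
  qed simp
  ultimately have [measurable]: "(\<lambda>x. circ_dist0 ((F ^^ k) x)) \<in> borel_measurable borel" for k
    using measurable_compose borel_measurable_continuous_onI by blast
  have "X \<longlonglongrightarrow> 0 \<longleftrightarrow> Cauchy X \<and> lim X = (0::real)" for X
    by (metis Cauchy_convergent_iff convergent_LIMSEQ_iff limI LIMSEQ_imp_Cauchy)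
  then have "basin0_lift F = {x \<in> space borel. Cauchy (\<lambda>k. circ_dist0 ((F ^^ k) x)) \<and>
      lim (\<lambda>k. circ_dist0 ((F ^^ k) x)) = 0}"
    by (auto simp: basin0_lift_def)
  also have "\<dots> \<in> sets borel" by measurable
  finally show ?thesis .
qed

lemma pos_if_continuous_nonzero:
  fixes h :: "real \<Rightarrow> real"
  assumes cont: "\<And>x. isCont h x" and nonzero: "\<And>x. h x \<noteq> 0" and pos: "0 < h 0"
  shows "0 < h x"
proof (rule ccontr)
  assume "\<not> 0 < h x"
  then have neg: "h x < 0" using nonzero[of x] by simp
  have "continuous_on S h" for S using cont by (simp add: continuous_at_imp_continuous_on)
  then have "\<exists>\<xi>. h \<xi> = 0"
    using IVT2'[of h x 0 0] IVT'[of h x 0 0] neg pos by (cases "0 \<le> x") force+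
  then show False using nonzero by blast
qed

lemma basin0_lift_add_of_int:
  fixes F :: "real \<Rightarrow> real"
  assumes lift: "\<And>x. F (x + 1) = F x + of_int d"
  shows "basin0_lift (\<lambda>x. F x + of_int k) = basin0_lift F"
proof -
  have "\<exists>j::int. ((\<lambda>x. F x + of_int k) ^^ n) x = (F ^^ n) x + of_int j" for n x
  proof (induction n)
    case 0
    show ?case by (intro exI[of _ 0]) simp
  next
    case (Suc n)
    then obtain j :: int where "((\<lambda>x. F x + of_int k) ^^ n) x = (F ^^ n) x + of_int j" by blast
    then have "((\<lambda>x. F x + of_int k) ^^ Suc n) x = (F ^^ Suc n) x + of_int (j * d + k)"
      using lift_add_of_int[where h = F, OF lift, of "(F ^^ n) x" j] by simp
    then show ?case by blast
  qed
  then have "circ_dist0 (((\<lambda>x. F x + of_int k) ^^ n) x) = circ_dist0 ((F ^^ n) x)" for n x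
    by (metis circ_dist0_add_of_int)
  then show ?thesis by (simp add: basin0_lift_def)
qed

lemma le_exp_mult_if_log_derivative_bounded:
  fixes h h' :: "real \<Rightarrow> real"
  assumes deriv: "\<And>x. (h has_real_derivative h' x) (at x)" and pos: "\<And>x. 0 < h x"
    and bound: "\<And>x. \<bar>h' x\<bar> \<le> L * h x"
  shows "h u \<le> exp (L * \<bar>u - v\<bar>) * h v"
proof -
  have ln_deriv: "((\<lambda>z. ln (h z)) has_real_derivative h' z / h z) (at z)" for z
    using deriv[of z] pos[of z] by (auto intro!: derivative_eq_intros)
  have ln_bound: "\<bar>h' z / h z\<bar> \<le> L" for z
    using bound[of z] pos[of z] by (simp add: abs_divide pos_divide_le_eq)
  have "ln (h u) \<le> L * \<bar>u - v\<bar> + ln (h v)"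
  proof (cases "u = v")
    case False
    define a b where "a = min u v" and "b = max u v"
    have ab: "a < b" using False by (simp add: a_def b_def)
    obtain z where "ln (h b) - ln (h a) = (b - a) * (h' z / h z)"
      using MVT2[OF ab, of "\<lambda>z. ln (h z)" "\<lambda>z. h' z / h z"] ln_deriv by blast
    then have "\<bar>ln (h b) - ln (h a)\<bar> = (b - a) * \<bar>h' z / h z\<bar>"
      using ab by (simp add: abs_mult)
    also have "\<dots> \<le> (b - a) * L"
      using ln_bound[of z] ab by (intro mult_left_mono) auto
    finally have "\<bar>ln (h b) - ln (h a)\<bar> \<le> (b - a) * L" .
    moreover have "\<bar>ln (h u) - ln (h v)\<bar> = \<bar>ln (h b) - ln (h a)\<bar>"
      by (cases "u \<le> v") (auto simp: a_def b_def)
    moreover have "b - a = \<bar>u - v\<bar>" by (auto simp: a_def b_def)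
    ultimately have "\<bar>ln (h u) - ln (h v)\<bar> \<le> L * \<bar>u - v\<bar>" by (simp add: mult.commute)
    then show ?thesis by (simp add: abs_le_iff)
  qed simp
  then have "exp (ln (h u)) \<le> exp (L * \<bar>u - v\<bar> + ln (h v))" by simp
  then show ?thesis using pos by (simp add: exp_add)
qed

section \<open>The saddle-node\<close>

locale saddle_node_lift =
  fixes G f f2 :: "real \<Rightarrow> real" and d :: int
  assumes lift: "\<And>x. G (x + 1) = G x + of_int d"
    and G_deriv: "\<And>x. (G has_real_derivative f x) (at x)"
    and f_deriv: "\<And>x. (f has_real_derivative f2 x) (at x)"
    and f2_cont: "continuous_on UNIV f2"
    and f_pos: "\<And>x. 0 < f x"
    and G_0: "G 0 = 0"
    and f_0: "f 0 = 1"
    and f2_0: "0 < f2 0"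
begin

lemma isCont_G: "isCont G x"
  using G_deriv DERIV_isCont by blast

lemma isCont_f: "isCont f x"
  using f_deriv DERIV_isCont by blast

lemma isCont_f2: "isCont f2 x"
  using f2_cont by (simp add: continuous_on_eq_continuous_at)

lemma G_strict_mono: "x < y \<Longrightarrow> G x < G y"
  by (rule DERIV_pos_imp_increasing) (use G_deriv f_pos in auto)

lemma G_mono: "x \<le> y \<Longrightarrow> G x \<le> G y"
  using G_strict_mono by (cases "x = y") (auto simp: less_eq_real_def)

lemma G_add_of_int: "G (x + of_int m) = G x + of_int m * of_int d"
  using lift by (rule lift_add_of_int)

lemma degree_pos: "1 \<le> d"
proof -
  have "G 0 < G 1" using G_strict_mono by simp
  then show ?thesis using lift[of 0] G_0 by simp
qed

lemma f_periodic: "f (x + 1) = f x"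
  using lift G_deriv by (rule derivative_of_lift_periodic)

lemma f2_periodic: "f2 (x + 1) = f2 x"
  using f_periodic f_deriv by (intro derivative_of_lift_periodic[of f 0]) simp_all

lemma f_add_of_int: "f (x + of_int m) = f x"
  using lift_add_of_int[of f 0] f_periodic by simp

lemma f_frac: "f (frac x) = f x"
  using f_periodic by (rule periodic_frac)

definition Lf :: real where
  "Lf = (SOME L. 0 < L \<and> (\<forall>u v. f u \<le> exp (L * \<bar>u - v\<bar>) * f v))"

lemma Lf_pos: "0 < Lf" and f_le_exp_Lf: "f u \<le> exp (Lf * \<bar>u - v\<bar>) * f v"
proof -
  obtain z where z: "\<And>x. f z \<le> f x"
    using periodic_attains_min[OF f_periodic isCont_f] by blast
  obtain y where y: "\<And>x. - \<bar>f2 y\<bar> \<le> - \<bar>f2 x\<bar>"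
    by (rule periodic_attains_min[of "\<lambda>x. - \<bar>f2 x\<bar>"])
      (use f2_periodic isCont_f2 in \<open>auto intro!: continuous_intros\<close>)
  define L where "L = (\<bar>f2 y\<bar> + 1) / f z"
  have "\<bar>f2 x\<bar> \<le> L * f x" for x
  proof -
    have "\<bar>f2 x\<bar> \<le> (\<bar>f2 y\<bar> + 1) * 1" using y[of x] by simp
    also have "\<dots> \<le> (\<bar>f2 y\<bar> + 1) * (f x / f z)"
      using z[of x] f_pos[of z] by (intro mult_left_mono) auto
    finally show ?thesis by (simp add: L_def)
  qed
  then have "f u \<le> exp (L * \<bar>u - v\<bar>) * f v" for u v
    by (rule le_exp_mult_if_log_derivative_bounded[OF f_deriv f_pos])
  moreover have "0 < L" using f_pos[of z] by (simp add: L_def)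
  ultimately have "0 < L \<and> (\<forall>u v. f u \<le> exp (L * \<bar>u - v\<bar>) * f v)" by blast
  then have "0 < Lf \<and> (\<forall>u v. f u \<le> exp (Lf * \<bar>u - v\<bar>) * f v)"
    unfolding Lf_def by (rule someI)
  then show "0 < Lf" "f u \<le> exp (Lf * \<bar>u - v\<bar>) * f v" by auto
qed

definition deriv_iter :: "nat \<Rightarrow> real \<Rightarrow> real" where
  "deriv_iter n z = (\<Prod>j<n. f ((G^^j) z))"

lemma deriv_iter_Suc: "deriv_iter (Suc n) z = deriv_iter n z * f ((G^^n) z)"
  by (simp add: deriv_iter_def)

lemma deriv_iter_pos: "0 < deriv_iter n z"
  unfolding deriv_iter_def using f_pos by (intro prod_pos) auto

lemma iterate_has_derivative: "((G^^n) has_real_derivative deriv_iter n z) (at z)"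
proof (induction n arbitrary: z)
  case (Suc n)
  have "((\<lambda>z. G ((G^^n) z)) has_real_derivative f ((G^^n) z) * deriv_iter n z) (at z)"
    by (rule DERIV_chain2[OF G_deriv Suc])
  then show ?case by (simp add: deriv_iter_Suc mult.commute)
qed (simp add: deriv_iter_def id_def)

lemma isCont_iterate: "isCont (G^^n) z"
  using iterate_has_derivative DERIV_isCont by blast

lemma isCont_deriv_iter: "isCont (deriv_iter n) z"
  unfolding deriv_iter_def by (intro continuous_intros isCont_o2[OF isCont_iterate isCont_f])

lemma iterate_strict_mono: "x < y \<Longrightarrow> (G^^n) x < (G^^n) y"
  by (induction n) (auto intro: G_strict_mono)

lemma iterate_mono: "x \<le> y \<Longrightarrow> (G^^n) x \<le> (G^^n) y"
  by (induction n) (auto intro: G_mono)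

lemma iterate_le_iff: "(G^^n) x \<le> (G^^n) y \<longleftrightarrow> x \<le> y"
  using iterate_strict_mono iterate_mono by (meson not_le)

lemma iterate_less_iff: "(G^^n) x < (G^^n) y \<longleftrightarrow> x < y"
  using iterate_strict_mono iterate_mono by (meson not_le)

lemma iterate_add_of_int: "(G^^n) (x + of_int m) = (G^^n) x + of_int (m * d ^ n)"
proof (induction n)
  case (Suc n)
  have "(G^^Suc n) (x + of_int m) = G ((G^^n) x + of_int (m * d ^ n))" using Suc by simp
  also have "\<dots> = G ((G^^n) x) + of_int (m * d ^ n) * of_int d" by (rule G_add_of_int)
  also have "\<dots> = (G^^Suc n) x + of_int (m * d ^ Suc n)" by (simp add: algebra_simps)
  finally show ?case .
qed simp

lemma iterate_at_0: "(G^^n) 0 = 0"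
  by (induction n) (auto simp: G_0)

lemma iterate_of_int: "(G^^n) (of_int m) = of_int (m * d ^ n)"
  using iterate_add_of_int[of n 0 m] by (simp add: iterate_at_0)

lemma iterate_MVT:
  assumes "a \<le> b"
  obtains \<xi> where "a \<le> \<xi>" "\<xi> \<le> b" "(G^^n) b - (G^^n) a = deriv_iter n \<xi> * (b - a)"
proof (cases "a = b")
  case False
  then obtain z where "a < z" "z < b" "(G^^n) b - (G^^n) a = (b - a) * deriv_iter n z"
    using MVT2[of a b "G^^n" "deriv_iter n"] assms iterate_has_derivative by force
  then show ?thesis using that[of z] by (simp add: mult.commute)
qed (use that[of a] in simp)

lemma G_diff_ge:
  assumes "u \<le> v" and bound: "\<And>\<xi>. u \<le> \<xi> \<Longrightarrow> \<xi> \<le> v \<Longrightarrow> c \<le> f \<xi>"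
  shows "c * (v - u) \<le> G v - G u"
proof -
  obtain \<xi> where \<xi>: "u \<le> \<xi>" "\<xi> \<le> v" "(G^^1) v - (G^^1) u = deriv_iter 1 \<xi> * (v - u)"
    using iterate_MVT[OF assms(1), where n = 1] by blast
  have "c * (v - u) \<le> f \<xi> * (v - u)" using bound[OF \<xi>(1,2)] assms(1) by (intro mult_right_mono) auto
  then show ?thesis using \<xi>(3) by (simp add: deriv_iter_def)
qed

lemma deriv_iter_distortion:
  assumes "a \<le> s" "s \<le> b" "a \<le> t" "t \<le> b"
  shows "deriv_iter n s \<le> exp (Lf * (\<Sum>j<n. (G^^j) b - (G^^j) a)) * deriv_iter n t"
proof (induction n)
  case (Suc n)
  have "\<bar>(G^^n) s - (G^^n) t\<bar> \<le> (G^^n) b - (G^^n) a"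
    using assms iterate_mono[of a s n] iterate_mono[of s b n] iterate_mono[of a t n]
      iterate_mono[of t b n] by (auto simp: abs_le_iff)
  then have "exp (Lf * \<bar>(G^^n) s - (G^^n) t\<bar>) * f ((G^^n) t)
      \<le> exp (Lf * ((G^^n) b - (G^^n) a)) * f ((G^^n) t)"
    using Lf_pos f_pos[of "(G^^n) t"] by (intro mult_right_mono) auto
  with f_le_exp_Lf have step: "f ((G^^n) s) \<le> exp (Lf * ((G^^n) b - (G^^n) a)) * f ((G^^n) t)"
    by (rule order_trans)
  have "deriv_iter (Suc n) s = deriv_iter n s * f ((G^^n) s)" by (rule deriv_iter_Suc)
  also have "\<dots> \<le> (exp (Lf * (\<Sum>j<n. (G^^j) b - (G^^j) a)) * deriv_iter n t) *
       (exp (Lf * ((G^^n) b - (G^^n) a)) * f ((G^^n) t))"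
    using Suc step deriv_iter_pos f_pos by (intro mult_mono) (auto intro: less_imp_le)
  also have "\<dots> = exp (Lf * (\<Sum>j<Suc n. (G^^j) b - (G^^j) a)) * deriv_iter (Suc n) t"
    by (simp add: deriv_iter_Suc distrib_left exp_add)
  finally show ?case .
qed (simp add: deriv_iter_def)

lemma G_surj: "\<exists>x. G x = y"
proof -
  define N where "N = \<lceil>\<bar>y\<bar>\<rceil>"
  have N: "0 \<le> N" "-N \<le> y" "y \<le> N" unfolding N_def by linarith+
  have "of_int (-N * d) \<le> (of_int (-N) :: real)" "(of_int N :: real) \<le> of_int (N * d)"
    using N(1) degree_pos by (simp_all add: mult_le_cancel_left1)
  moreover have "G (of_int (-N)) = of_int (-N * d)" "G (of_int N) = of_int (N * d)"
    using G_add_of_int[of 0 "-N"] G_add_of_int[of 0 N] G_0 by simp_all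
  ultimately have "G (of_int (-N)) \<le> y" "y \<le> G (of_int N)" using N by linarith+
  then show ?thesis
    using IVT'[of G "of_int (-N)" y "of_int N"] N isCont_G
    by (auto simp: continuous_at_imp_continuous_on)
qed

lemma iterate_surj: "\<exists>x. (G^^n) x = y"
proof (induction n arbitrary: y)
  case (Suc n)
  obtain z where "G z = y" using G_surj by blast
  moreover obtain x where "(G^^n) x = z" using Suc by blast
  ultimately show ?case by auto
qed simp

lemma orbit_limit_fixed:
  assumes "(\<lambda>n. (G^^n) z) \<longlonglongrightarrow> L"
  shows "G L = L"
proof -
  have "(\<lambda>n. G ((G^^n) z)) \<longlonglongrightarrow> G L"
    by (rule isCont_tendsto_compose[OF isCont_G assms])
  moreover have "(\<lambda>n. G ((G^^n) z)) \<longlonglongrightarrow> L"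
    using LIMSEQ_Suc[OF assms] by simp
  ultimately show ?thesis using LIMSEQ_unique by blast
qed

definition e0 :: real where
  "e0 = (SOME e. 0 < e \<and> e < 1/4 \<and> (\<forall>z. \<bar>z\<bar> \<le> e \<longrightarrow> f2 0 / 2 \<le> f2 z))"

lemma e0_pos: "0 < e0" and e0_less: "e0 < 1/4"
  and f2_near_0: "\<bar>z\<bar> \<le> e0 \<Longrightarrow> f2 0 / 2 \<le> f2 z"
proof -
  obtain s where s: "0 < s" "\<And>z. dist z 0 < s \<Longrightarrow> dist (f2 z) (f2 0) < f2 0 / 2"
    using isCont_f2[of 0] f2_0 unfolding continuous_at_eps_delta by (meson half_gt_zero)
  have "f2 0 / 2 \<le> f2 z" if "\<bar>z\<bar> \<le> min (s/2) (1/8)" for z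
  proof -
    have "dist z 0 < s" using that s(1) by (simp add: dist_real_def)
    with s(2) have "\<bar>f2 z - f2 0\<bar> < f2 0 / 2" by (simp add: dist_real_def)
    then show ?thesis unfolding abs_less_iff by linarith
  qed
  then have "0 < min (s/2) (1/8) \<and> min (s/2) (1/8) < (1/4::real) \<and>
      (\<forall>z. \<bar>z\<bar> \<le> min (s/2) (1/8) \<longrightarrow> f2 0 / 2 \<le> f2 z)"
    using s(1) by auto
  then have "0 < e0 \<and> e0 < 1/4 \<and> (\<forall>z. \<bar>z\<bar> \<le> e0 \<longrightarrow> f2 0 / 2 \<le> f2 z)"
    unfolding e0_def by (rule someI)
  then show "0 < e0" "e0 < 1/4" "\<bar>z\<bar> \<le> e0 \<Longrightarrow> f2 0 / 2 \<le> f2 z" by auto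
qed

lemma f_ge_near_0:
  assumes "0 \<le> z" "z \<le> e0"
  shows "1 + f2 0 / 2 * z \<le> f z"
proof (cases "z = 0")
  case False
  then obtain \<xi> where \<xi>: "0 < \<xi>" "\<xi> < z" "f z - f 0 = (z - 0) * f2 \<xi>"
    using MVT2[of 0 z f f2] f_deriv assms by force
  have "f2 0 / 2 * z \<le> f2 \<xi> * z"
    using f2_near_0[of \<xi>] \<xi> assms by (intro mult_right_mono) auto
  moreover have "f z = 1 + f2 \<xi> * z" using \<xi> f_0 by (simp add: algebra_simps)
  ultimately show ?thesis by linarith
qed (simp add: f_0)

lemma f_le_near_0:
  assumes "-e0 \<le> z" "z \<le> 0"
  shows "f z \<le> 1 + f2 0 / 2 * z"
proof (cases "z = 0")
  case False
  then obtain \<xi> where \<xi>: "z < \<xi>" "\<xi> < 0" "f 0 - f z = (0 - z) * f2 \<xi>"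
    using MVT2[of z 0 f f2] f_deriv assms by force
  have "f2 0 / 2 * (-z) \<le> f2 \<xi> * (-z)"
    using f2_near_0[of \<xi>] \<xi> assms by (intro mult_right_mono) auto
  moreover have "f z = 1 + f2 \<xi> * z" using \<xi> f_0 by (simp add: algebra_simps)
  ultimately show ?thesis by (simp add: algebra_simps)
qed (simp add: f_0)

lemma f_ge_1_near_0: "0 \<le> z \<Longrightarrow> z \<le> e0 \<Longrightarrow> 1 \<le> f z"
  using f_ge_near_0[of z] f2_0 mult_nonneg_nonneg[of "f2 0 / 2" z] by linarith

lemma G_gt_id_near_0:
  assumes "\<bar>z\<bar> \<le> e0" "z \<noteq> 0"
  shows "z < G z"
proof (cases "0 < z")
  case True
  then obtain \<xi> where \<xi>: "0 < \<xi>" "\<xi> < z" "G z - G 0 = (z - 0) * f \<xi>"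
    using MVT2[of 0 z G f] G_deriv by force
  have "\<xi> \<le> e0" using \<xi> assms True by simp
  then have "1 < f \<xi>" using f_ge_near_0[of \<xi>] \<xi> f2_0 mult_pos_pos[of "f2 0 / 2" \<xi>] by linarith
  then show ?thesis using \<xi> True G_0 by (simp add: mult_less_cancel_left1)
next
  case False
  then have z: "z < 0" using assms(2) by simp
  then obtain \<xi> where \<xi>: "z < \<xi>" "\<xi> < 0" "G 0 - G z = (0 - z) * f \<xi>"
    using MVT2[of z 0 G f] G_deriv by force
  have "-e0 \<le> \<xi>" using \<xi> assms z by simp
  then have "f \<xi> < 1" using f_le_near_0[of \<xi>] \<xi> f2_0 mult_pos_neg[of "f2 0 / 2" \<xi>] by linarith
  then have "(- z) * f \<xi> < - z" using z by (simp add: mult_less_cancel_left1)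
  then show ?thesis using \<xi> G_0 by simp
qed

lemma iterate_pos: "0 < z \<Longrightarrow> 0 < (G^^n) z"
  using iterate_strict_mono[of 0 z n] iterate_at_0 by simp

lemma lt_G_if_G_le_e0:
  assumes "0 < w" "G w \<le> e0"
  shows "w < G w"
proof (cases "w \<le> e0")
  case False
  then have "G e0 < G w" using G_strict_mono by simp
  moreover have "e0 < G e0" using G_gt_id_near_0[of e0] e0_pos by simp
  ultimately show ?thesis using assms by simp
qed (use G_gt_id_near_0 assms in auto)

lemma orbit_mono_below_e0:
  assumes "0 < z" "(G^^M) z \<le> e0" "i \<le> M"
  shows "(G^^i) z \<le> (G^^M) z"
  using assms
proof (induction M arbitrary: z i)
  case (Suc M)
  have eq: "(G^^Suc M) z = (G^^M) (G z)" by (simp only: funpow_Suc_right comp_def)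
  have Gz: "0 < G z" using iterate_pos[OF Suc.prems(1), of 1] by simp
  have IH: "(G^^i) (G z) \<le> (G^^M) (G z)" if "i \<le> M" for i
    using Suc.IH[OF Gz _ that] Suc.prems(2) eq by simp
  show ?case
  proof (cases i)
    case 0
    have "G z \<le> e0" using IH[of 0] Suc.prems(2) eq by simp
    then have "z < G z" using lt_G_if_G_le_e0 Suc.prems(1) by blast
    then show ?thesis using 0 eq IH[of 0] by simp
  next
    case (Suc i')
    then show ?thesis using IH[of i'] Suc.prems(3) eq by (simp only: funpow_Suc_right comp_def)
  qed
qed simp

lemma orbit_leaves_right_nbhd:
  assumes "0 < z"
  obtains n where "e0 < (G^^n) z"
proof (rule ccontr)
  assume "\<not> thesis"
  then have below: "(G^^n) z \<le> e0" for n using that by (meson not_le)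
  have "incseq (\<lambda>n. (G^^n) z)"
  proof (rule incseq_SucI)
    show "(G^^n) z \<le> (G^^Suc n) z" for n
      using lt_G_if_G_le_e0[of "(G^^n) z"] iterate_pos[OF assms] below[of "Suc n"] by simp
  qed
  then obtain L where L: "(\<lambda>n. (G^^n) z) \<longlonglongrightarrow> L" "\<And>i. (G^^i) z \<le> L"
    using incseq_convergent[of "\<lambda>n. (G^^n) z" e0] below by blast
  have "L \<le> e0" using LIMSEQ_le_const2[OF L(1)] below by blast
  moreover have "0 < L" using L(2)[of 0] assms by simp
  ultimately have "L < G L" using G_gt_id_near_0[of L] by simp
  with orbit_limit_fixed[OF L(1)] show False by simp
qed

lemma orbit_tendsto_0_left:
  assumes "-e0 \<le> z" "z \<le> 0"
  shows "(\<lambda>n. (G^^n) z) \<longlonglongrightarrow> 0"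
proof -
  have step: "y \<le> G y \<and> G y \<le> 0" if "-e0 \<le> y" "y \<le> 0" for y
    using G_gt_id_near_0[of y] G_mono[of y 0] G_0 that by (cases "y = 0") auto
  have inv: "-e0 \<le> (G^^n) z \<and> (G^^n) z \<le> 0" for n
  proof (induction n)
    case (Suc n)
    then show ?case using step[of "(G^^n) z"] by auto
  qed (use assms in simp)
  have "incseq (\<lambda>n. (G^^n) z)"
    using step inv by (intro incseq_SucI) simp
  then obtain L where L: "(\<lambda>n. (G^^n) z) \<longlonglongrightarrow> L" "\<And>i. (G^^i) z \<le> L"
    using incseq_convergent[of "\<lambda>n. (G^^n) z" 0] inv by blast
  have "L \<le> 0" using LIMSEQ_le_const2[OF L(1)] inv by blast
  moreover have "-e0 \<le> L" using L(2)[of 0] assms by simp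
  moreover have "G L = L" by (rule orbit_limit_fixed[OF L(1)])
  ultimately have "L = 0" using G_gt_id_near_0[of L] by force
  then show ?thesis using L(1) by simp
qed

subsection \<open>The basin and its component \<open>W0\<close>\<close>

abbreviation basin :: "real set" where "basin \<equiv> basin0_lift G"

lemma basin_add_of_int: "z \<in> basin \<Longrightarrow> z + of_int m \<in> basin"
proof -
  have "circ_dist0 ((G^^k) (z + of_int m)) = circ_dist0 ((G^^k) z)" for k
    by (simp only: iterate_add_of_int circ_dist0_add_of_int)
  then show "z \<in> basin \<Longrightarrow> z + of_int m \<in> basin" by (simp add: basin0_lift_def)
qed

lemma basin_G_iff: "G z \<in> basin \<longleftrightarrow> z \<in> basin"
proof -
  have "circ_dist0 ((G^^k) (G z)) = circ_dist0 ((G^^Suc k) z)" for k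
    by (simp add: funpow_swap1)
  then show ?thesis
    using LIMSEQ_Suc[of "\<lambda>k. circ_dist0 ((G^^k) z)" 0] LIMSEQ_imp_Suc[of "\<lambda>k. circ_dist0 ((G^^k) z)" 0]
    by (auto simp: basin0_lift_def)
qed

lemma basin_iterate_iff: "(G^^k) z \<in> basin \<longleftrightarrow> z \<in> basin"
  by (induction k) (auto simp: basin_G_iff)

lemma fixed_point_notin_basin:
  assumes "G q = q" "q \<notin> \<int>"
  shows "q \<notin> basin"
proof -
  have "(G^^k) q = q" for k by (induction k) (simp_all add: assms(1))
  then show ?thesis using circ_dist0_pos[OF assms(2)] LIMSEQ_const_iff[of "circ_dist0 q" 0]
    by (simp add: basin0_lift_def)
qed

lemma of_int_in_basin: "of_int m \<in> basin"
  by (simp only: basin0_lift_def iterate_of_int circ_dist0_of_int mem_Collect_eq tendsto_const)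

lemma left_nbhd_in_basin:
  assumes "-e0 \<le> z" "z \<le> 0"
  shows "z \<in> basin"
proof -
  have "(\<lambda>k. \<bar>(G^^k) z\<bar>) \<longlonglongrightarrow> 0"
    using orbit_tendsto_0_left[OF assms] by (rule tendsto_rabs_zero)
  then have "(\<lambda>k. circ_dist0 ((G^^k) z)) \<longlonglongrightarrow> 0"
  proof (rule tendsto_sandwich[where f = "\<lambda>_. 0" and h = "\<lambda>k. \<bar>(G^^k) z\<bar>", rotated 3])
    show "\<forall>\<^sub>F n in sequentially. 0 \<le> circ_dist0 ((G^^n) z)" by (simp add: circ_dist0_def)
    show "\<forall>\<^sub>F n in sequentially. circ_dist0 ((G^^n) z) \<le> \<bar>(G^^n) z\<bar>" by (simp add: circ_dist0_le_abs)
  qed simp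
  then show ?thesis by (simp add: basin0_lift_def)
qed

lemma basin_borel: "basin \<in> sets borel"
  by (rule basin0_lift_borel) (simp add: continuous_at_imp_continuous_on isCont_G)

abbreviation W0 :: "real set" where "W0 \<equiv> W0_lift G"

lemma W0_subset_basin: "W0 \<subseteq> basin"
  unfolding W0_lift_def by (rule connected_component_subset)

lemma zero_in_W0: "0 \<in> W0"
  using of_int_in_basin[of 0] unfolding W0_lift_def by (simp add: connected_component_refl)

lemma W0_interval:
  assumes "a \<in> W0" "b \<in> W0" "a \<le> t" "t \<le> b"
  shows "t \<in> W0"
proof -
  have "is_interval W0" unfolding is_interval_connected_1 W0_lift_def by simp
  then show ?thesis using assms unfolding is_interval_1 by blast
qed

lemma W0_maximal: "0 \<in> T \<Longrightarrow> connected T \<Longrightarrow> T \<subseteq> basin \<Longrightarrow> T \<subseteq> W0"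
  unfolding W0_lift_def by (rule connected_component_maximal)

lemma left_nbhd_in_W0: "-e0 \<in> W0"
proof -
  have "{-e0..0} \<subseteq> W0" by (rule W0_maximal) (use e0_pos left_nbhd_in_basin in auto)
  then show ?thesis using e0_pos by auto
qed

lemma G_image_W0: "G ` W0 \<subseteq> W0"
proof (rule W0_maximal)
  show "0 \<in> G ` W0" using zero_in_W0 G_0 by (metis image_eqI)
  show "connected (G ` W0)" unfolding W0_lift_def
    by (rule connected_continuous_image) (simp_all add: continuous_at_imp_continuous_on isCont_G)
  show "G ` W0 \<subseteq> basin" using W0_subset_basin basin_G_iff by blast
qed

lemma basin_extends_right_if_lt_G:
  assumes s: "0 < s" and below: "{0..<s} \<subseteq> basin" and moved: "s < G s"
  obtains s' where "s < s'" "{0..s'} \<subseteq> basin"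
proof -
  define E where "E = (G s - s) / 2"
  have E: "0 < E" using moved by (simp add: E_def)
  obtain \<delta> where \<delta>: "0 < \<delta>" "\<And>t. dist t s < \<delta> \<Longrightarrow> dist (G t) (G s) < E"
    using isCont_G[of s] E unfolding continuous_at_eps_delta by blast
  define t where "t = s - min (\<delta>/2) (s/2)"
  have t: "0 < t" "t < s" using \<delta>(1) s by (auto simp: t_def)
  have "dist t s < \<delta>" using \<delta>(1) s by (auto simp: t_def dist_real_def)
  then have "\<bar>G t - G s\<bar> < E" using \<delta>(2) by (simp add: dist_real_def)
  moreover have "G s = s + 2 * E" by (simp add: E_def field_simps)
  ultimately have Gt: "s + E < G t" using abs_ge_minus_self[of "G t - G s"] by linarith
  have "{0..s + E} \<subseteq> basin"
  proof
    fix u assume u: "u \<in> {0..s + E}"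
    obtain v where v: "G v = u" using G_surj by blast
    have "0 \<le> v" using u v G_0 G_strict_mono[of v 0] by force
    moreover have "v < t" using u v Gt G_mono[of t v] by force
    ultimately have "v \<in> basin" using below t by auto
    then show "u \<in> basin" using v basin_G_iff by blast
  qed
  then show ?thesis using that[of "s + E"] E by simp
qed

lemma basin_extends_right_if_G_lt:
  assumes s: "0 < s" and below: "{0..<s} \<subseteq> basin" and Gs: "G s < s"
  obtains s' where "s < s'" "{0..s'} \<subseteq> basin"
proof -
  have Gs_pos: "0 < G s" using iterate_pos[OF s, of 1] by simp
  obtain \<delta> where \<delta>: "0 < \<delta>" "\<And>t. dist t s < \<delta> \<Longrightarrow> dist (G t) (G s) < s - G s"
    using isCont_G[of s] Gs unfolding continuous_at_eps_delta by (meson diff_gt_0_iff_gt)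
  have "{0..s + \<delta>/2} \<subseteq> basin"
  proof
    fix u assume u: "u \<in> {0..s + \<delta>/2}"
    show "u \<in> basin"
    proof (cases "u < s")
      case False
      then have "dist u s < \<delta>" using u \<delta>(1) by (simp add: dist_real_def)
      then have "G u < s" using \<delta>(2) by (auto simp: dist_real_def abs_less_iff)
      moreover have "G s \<le> G u" using False G_mono by simp
      ultimately have "G u \<in> basin" using below Gs_pos by auto
      then show ?thesis using basin_G_iff by blast
    qed (use below u in auto)
  qed
  then show ?thesis using that[of "s + \<delta>/2"] \<delta>(1) by simp
qed

lemma no_expanding_fixed_point_right:
  assumes s: "0 < s" "s < 1" and below: "{0..<s} \<subseteq> basin"
    and fixed: "G s = s" and expand: "1 < f s"
  shows False
proof -
  obtain \<delta> where \<delta>: "0 < \<delta>" "\<And>t. dist t s < \<delta> \<Longrightarrow> dist (f t) (f s) < f s - 1"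
    using isCont_f[of s] expand unfolding continuous_at_eps_delta by (meson diff_gt_0_iff_gt)
  define t1 where "t1 = s - min (\<delta>/2) (s/2)"
  have t1: "0 < t1" "t1 < s" using \<delta>(1) s by (auto simp: t1_def)
  obtain \<xi> where \<xi>: "t1 < \<xi>" "\<xi> < s" "G s - G t1 = (s - t1) * f \<xi>"
    using MVT2[OF t1(2), of G f] G_deriv by blast
  have "dist \<xi> s < \<delta>" using \<xi> \<delta>(1) by (auto simp: t1_def dist_real_def)
  then have "1 < f \<xi>" using \<delta>(2) by (auto simp: dist_real_def abs_less_iff)
  then have "(s - t1) * 1 < (s - t1) * f \<xi>" using t1 by (intro mult_strict_left_mono) auto
  then have Gt1: "G t1 < t1" using \<xi>(3) fixed by simp
  define t0 where "t0 = min e0 (t1/2)"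
  have t0: "0 < t0" "t0 < t1" "t0 \<le> e0" using e0_pos t1 by (auto simp: t0_def)
  have "t0 < G t0" using G_gt_id_near_0[of t0] t0 by simp
  moreover have "continuous_on {t0..t1} (\<lambda>x. G x - x)"
    using isCont_G by (intro continuous_intros) (simp add: continuous_at_imp_continuous_on)
  ultimately obtain q where q: "t0 \<le> q" "q \<le> t1" "G q - q = 0"
    using IVT2'[of "\<lambda>x. G x - x" t1 0 t0] Gt1 t0 by auto
  have "q \<notin> \<int>" using notin_Ints_between[of 0 q] q t0 t1 s by simp
  then have "q \<notin> basin" using fixed_point_notin_basin q by simp
  moreover have "q \<in> basin" using below q t0 t1 by auto
  ultimately show False by simp
qed

lemma no_right_nbhd_in_basin:
  assumes expanding: "\<And>x. (\<forall>n::int. x - of_int n \<notin> W0) \<Longrightarrow> 1 < f x"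
    and z0: "0 \<le> z0" "z0 < 1" "z0 \<notin> basin" and w: "0 < w"
  shows "\<not> {0..w} \<subseteq> basin"
proof
  assume w_basin: "{0..w} \<subseteq> basin"
  define T where "T = {t. {0..t} \<subseteq> basin}"
  have T_less: "t < z0" if "t \<in> T" for t
    using that z0 by (force simp: T_def)
  have wT: "w \<in> T" using w_basin by (simp add: T_def)
  have bdd: "bdd_above T" using T_less by (meson bdd_aboveI less_imp_le)
  define s where "s = Sup T"
  have s: "0 < s" "s < 1"
    using cSup_upper[OF wT bdd] cSup_least[of T z0] wT T_less w z0 by (force simp: s_def)+
  have below: "{0..<s} \<subseteq> basin"
  proof
    fix u assume u: "u \<in> {0..<s}"
    then obtain t where "t \<in> T" "u < t" using less_cSup_iff[of T u] wT bdd by (auto simp: s_def)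
    then show "u \<in> basin" using u by (auto simp: T_def)
  qed
  have no_extension: "\<not> {0..s'} \<subseteq> basin" if "s < s'" for s'
    using cSup_upper[OF _ bdd, of s'] that by (auto simp: s_def T_def)
  show False
  proof (cases "G s = s")
    case False
    then consider "s < G s" | "G s < s" by linarith
    then show False
      using basin_extends_right_if_lt_G[OF s(1) below] basin_extends_right_if_G_lt[OF s(1) below]
        no_extension by metis
  next
    case True
    have "s \<notin> basin" using notin_Ints_between[of 0 s] s fixed_point_notin_basin[OF True] by simp
    then have "\<forall>n::int. s - of_int n \<notin> W0"
      using W0_subset_basin basin_add_of_int by (metis diff_add_cancel subsetD)
    then show False using no_expanding_fixed_point_right[OF s below True] expanding by blast
  qed
qed

lemma W0_bounds:
  assumes expanding: "\<And>x. (\<forall>n::int. x - of_int n \<notin> W0) \<Longrightarrow> 1 < f x"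
    and z0: "0 \<le> z0" "z0 < 1" "z0 \<notin> basin" and w: "w \<in> W0"
  shows "z0 - 1 < w" "w \<le> 0"
proof -
  show "w \<le> 0"
  proof (rule ccontr)
    assume "\<not> w \<le> 0"
    moreover have "{0..w} \<subseteq> basin" using W0_interval[OF zero_in_W0 w] W0_subset_basin by auto
    ultimately show False using no_right_nbhd_in_basin[OF expanding z0] by simp
  qed
  show "z0 - 1 < w"
  proof (rule ccontr)
    assume "\<not> z0 - 1 < w"
    then have "z0 - 1 \<in> W0" using W0_interval[OF w zero_in_W0, of "z0 - 1"] z0 by simp
    then have "(z0 - 1) + of_int 1 \<in> basin" using W0_subset_basin basin_add_of_int by blast
    then show False using z0 by simp
  qed
qed

lemma Inf_W0_notin_W0:
  assumes p: "p \<in> W0" "-1 < p" "p < 0" and p_le: "\<And>w. w \<in> W0 \<Longrightarrow> p \<le> w"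
  shows False
proof -
  have Gp: "G p \<in> W0" using G_image_W0 p(1) by blast
  have "p \<notin> \<int>" using notin_Ints_between[of "-1" p] p by simp
  then have "G p \<noteq> p" using fixed_point_notin_basin[of p] p(1) W0_subset_basin by auto
  then have "p < G p" using p_le[OF Gp] by simp
  then obtain \<delta> where \<delta>: "0 < \<delta>" "\<And>t. dist t p < \<delta> \<Longrightarrow> dist (G t) (G p) < G p - p"
    using isCont_G[of p] unfolding continuous_at_eps_delta by (meson diff_gt_0_iff_gt)
  define t where "t = p - \<delta>/2"
  have t: "t < p" "p < G t"
    using \<delta> \<delta>(2)[of t] by (auto simp: t_def dist_real_def abs_less_iff)
  have "{t..0} \<subseteq> basin"
  proof
    fix u assume u: "u \<in> {t..0}"
    show "u \<in> basin"
    proof (cases "u < p")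
      case True
      then have "G u \<in> W0"
        using W0_interval[OF p(1) Gp, of "G u"] G_mono[of t u] G_mono[of u p] t u by auto
      then show ?thesis using W0_subset_basin basin_G_iff by blast
    next
      case False
      then show ?thesis using W0_interval[OF p(1) zero_in_W0, of u] u W0_subset_basin by auto
    qed
  qed
  then have "{t..0} \<subseteq> W0" using t p by (intro W0_maximal) auto
  then have "t \<in> W0" using t(1) p(3) by (auto simp: subset_iff)
  then show False using p_le[of t] t(1) by simp
qed

lemma W0_eq_interval:
  assumes expanding: "\<And>x. (\<forall>n::int. x - of_int n \<notin> W0) \<Longrightarrow> 1 < f x"
    and z0: "0 \<le> z0" "z0 < 1" "z0 \<notin> basin"
  obtains p where "-1 < p" "p < 0" "W0 = {p<..0}"
proof -
  note bounds = W0_bounds[OF expanding z0]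
  have bdd: "bdd_below W0" using bounds by (meson bdd_belowI less_imp_le)
  define p where "p = Inf W0"
  have p_le: "p \<le> w" if "w \<in> W0" for w unfolding p_def by (rule cInf_lower[OF that bdd])
  have "z0 - 1 \<le> p" unfolding p_def using zero_in_W0 bounds by (intro cInf_greatest) (auto intro: less_imp_le)
  moreover have "z0 \<noteq> 0" using z0 of_int_in_basin[of 0] by auto
  ultimately have p_gt: "-1 < p" using z0 by simp
  have p_lt: "p < 0" using p_le[OF left_nbhd_in_W0] e0_pos by simp
  have "p \<notin> W0" using Inf_W0_notin_W0[OF _ p_gt p_lt p_le] by blast
  have "W0 = {p<..0}"
  proof
    show "W0 \<subseteq> {p<..0}" using p_le bounds \<open>p \<notin> W0\<close> by (force simp: order.order_iff_strict)
    show "{p<..0} \<subseteq> W0"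
    proof
      fix u assume u: "u \<in> {p<..0}"
      then obtain w where "w \<in> W0" "w < u" using cInf_less_iff[OF _ bdd] zero_in_W0 by (auto simp: p_def)
      then show "u \<in> W0" using W0_interval[OF _ zero_in_W0, of w u] u by simp
    qed
  qed
  then show ?thesis using that p_gt p_lt by blast
qed

end

section \<open>Expansion away from \<open>W0\<close>\<close>

text \<open>The parameter \<open>p\<close> is the left end of \<open>W0 = {p<..0}\<close> (lemma \<open>W0_eq_interval\<close>); the
  assumption \<open>expanding\<close> is the hypothesis of the theorem in this form.\<close>

locale expanding_saddle_node_lift = saddle_node_lift +
  fixes p :: real
  assumes p_gt: "-1 < p" and p_lt: "p < 0"
    and expanding: "\<And>x. (\<forall>n::int. x - of_int n \<notin> {p<..0}) \<Longrightarrow> 1 < f x"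
begin

lemma f_gt_1_if_frac:
  assumes "0 < frac x" "frac x \<le> 1 + p"
  shows "1 < f x"
proof (rule expanding, intro allI)
  fix n :: int
  have x: "x = frac x + of_int \<lfloor>x\<rfloor>" by (simp add: frac_def)
  show "x - of_int n \<notin> {p<..0}"
  proof (cases "n \<le> \<lfloor>x\<rfloor>")
    case True
    then have "(of_int n :: real) \<le> of_int \<lfloor>x\<rfloor>" by linarith
    then have "0 < x - of_int n" using assms(1) x by linarith
    then show ?thesis by simp
  next
    case False
    then have "of_int \<lfloor>x\<rfloor> - of_int n \<le> (-1::real)" by simp
    then have "x - of_int n \<le> p" using assms(2) x by simp
    then show ?thesis by simp
  qed
qed

lemma f_gt_1: "0 < z \<Longrightarrow> z \<le> 1 + p \<Longrightarrow> 1 < f z"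
  using f_gt_1_if_frac[of z] frac_eq[of z] p_lt by simp

lemma f_ge_1_if_frac:
  assumes "frac x \<le> 1 + p"
  shows "1 \<le> f x"
proof (cases "frac x = 0")
  case True
  then show ?thesis using f_frac[of x] f_0 by (metis order_refl)
next
  case False
  then show ?thesis using f_gt_1_if_frac[of x] frac_ge_0[of x] assms by simp
qed

definition eps :: real where
  "eps = (SOME e. 0 < e \<and> 2 * e \<le> e0 \<and> e < 1 + p \<and> (\<forall>z. \<bar>z\<bar> \<le> e \<longrightarrow> f z \<le> 3/2))"

lemma eps_pos: "0 < eps" and eps_le_e0: "2 * eps \<le> e0" and eps_less: "eps < 1 + p"
  and f_le_near_0: "\<bar>z\<bar> \<le> eps \<Longrightarrow> f z \<le> 3/2"
proof -
  obtain s where s: "0 < s" "\<And>z. dist z 0 < s \<Longrightarrow> dist (f z) (f 0) < 1/2"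
    using isCont_f[of 0] unfolding continuous_at_eps_delta by (meson half_gt_zero zero_less_one)
  define e where "e = min (min (e0/2) ((1 + p)/2)) (s/2)"
  have "f z \<le> 3/2" if "\<bar>z\<bar> \<le> e" for z
  proof -
    have "dist z 0 < s" using that s(1) by (simp add: e_def dist_real_def)
    with s(2) have "\<bar>f z - 1\<bar> < 1/2" by (simp add: dist_real_def f_0)
    then show ?thesis using abs_ge_self[of "f z - 1"] by linarith
  qed
  moreover have "e \<le> e0/2" unfolding e_def by (rule min.coboundedI1, rule min.coboundedI1) simp
  moreover have "e \<le> (1 + p)/2" unfolding e_def by (rule min.coboundedI1, rule min.coboundedI2) simp
  moreover have "0 < e" using s(1) e0_pos p_gt by (simp add: e_def)
  ultimately have "0 < e \<and> 2 * e \<le> e0 \<and> e < 1 + p \<and> (\<forall>z. \<bar>z\<bar> \<le> e \<longrightarrow> f z \<le> 3/2)"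
    using p_gt by auto
  then have "0 < eps \<and> 2 * eps \<le> e0 \<and> eps < 1 + p \<and> (\<forall>z. \<bar>z\<bar> \<le> eps \<longrightarrow> f z \<le> 3/2)"
    unfolding eps_def by (rule someI)
  then show "0 < eps" "2 * eps \<le> e0" "eps < 1 + p" "\<bar>z\<bar> \<le> eps \<Longrightarrow> f z \<le> 3/2" by auto
qed

lemma eps_less_eighth: "eps < 1/8"
  using eps_le_e0 e0_less by simp

lemma G_le_three_halves_eps:
  assumes "0 \<le> y" "y \<le> eps"
  shows "G y \<le> 3/2 * eps"
proof -
  obtain \<xi> where \<xi>: "0 < \<xi>" "\<xi> < eps" "G eps - G 0 = (eps - 0) * f \<xi>"
    using MVT2[of 0 eps G f] G_deriv eps_pos by blast
  have "eps * f \<xi> \<le> eps * (3/2)"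
    using f_le_near_0[of \<xi>] \<xi> eps_pos by (intro mult_left_mono) auto
  moreover have "G y \<le> G eps" using G_mono assms by simp
  moreover have "G eps = eps * f \<xi>" using \<xi>(3) G_0 by simp
  ultimately show ?thesis by linarith
qed

definition min_step :: real where
  "min_step = (SOME b. 0 < b \<and> (\<forall>z. eps/2 \<le> z \<and> z \<le> 2 * eps \<longrightarrow> b \<le> G z - z))"

lemma min_step_pos: "0 < min_step"
  and G_minus_id_ge_min_step: "eps/2 \<le> z \<Longrightarrow> z \<le> 2 * eps \<Longrightarrow> min_step \<le> G z - z"
proof -
  have "continuous_on {eps/2..2 * eps} (\<lambda>z. G z - z)"
    using isCont_G by (intro continuous_intros) (simp add: continuous_at_imp_continuous_on)
  then obtain z0 where z0: "z0 \<in> {eps/2..2 * eps}" "\<forall>y\<in>{eps/2..2 * eps}. G z0 - z0 \<le> G y - y"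
    using continuous_attains_inf[of "{eps/2..2 * eps}" "\<lambda>z. G z - z"] eps_pos by auto
  have "z0 < G z0" using G_gt_id_near_0[of z0] z0(1) eps_pos eps_le_e0 by auto
  then have "\<exists>b. 0 < b \<and> (\<forall>z. eps/2 \<le> z \<and> z \<le> 2 * eps \<longrightarrow> b \<le> G z - z)"
    using z0 by (intro exI[of _ "G z0 - z0"]) auto
  then have "0 < min_step \<and> (\<forall>z. eps/2 \<le> z \<and> z \<le> 2 * eps \<longrightarrow> min_step \<le> G z - z)"
    unfolding min_step_def by (rule someI_ex)
  then show "0 < min_step" "eps/2 \<le> z \<Longrightarrow> z \<le> 2 * eps \<Longrightarrow> min_step \<le> G z - z" by auto
qed

definition sig :: real where
  "sig = (SOME s. \<exists>l. 0 < s \<and> s < -p \<and> 1 < l \<and>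
     (\<forall>z. eps - s \<le> z \<and> z \<le> 1 + p + s \<longrightarrow> l \<le> f z))"

definition lam :: real where
  "lam = (SOME l. 0 < sig \<and> sig < -p \<and> 1 < l \<and>
     (\<forall>z. eps - sig \<le> z \<and> z \<le> 1 + p + sig \<longrightarrow> l \<le> f z))"

lemma sig_pos: "0 < sig" and sig_less: "sig < -p"
  and lam_gt_1: "1 < lam" and f_ge_lam_base: "eps - sig \<le> z \<Longrightarrow> z \<le> 1 + p + sig \<Longrightarrow> lam \<le> f z"
proof -
  have f1p: "1 < f (1 + p)" using f_gt_1[of "1 + p"] p_gt by simp
  then obtain s where s: "0 < s" "\<And>z. dist z (1 + p) < s \<Longrightarrow> dist (f z) (f (1 + p)) < f (1 + p) - 1"
    using isCont_f[of "1 + p"] unfolding continuous_at_eps_delta by (meson diff_gt_0_iff_gt)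
  define \<sigma> where "\<sigma> = min (min (s/2) (eps/2)) (-p/2)"
  have \<sigma>: "0 < \<sigma>" "\<sigma> \<le> eps/2" "\<sigma> < -p" "\<sigma> < s"
    using s eps_pos p_lt by (auto simp: \<sigma>_def min_def)
  have gt1: "1 < f z" if "eps - \<sigma> \<le> z" "z \<le> 1 + p + \<sigma>" for z
  proof (cases "z \<le> 1 + p")
    case True
    then show ?thesis using f_gt_1[of z] that \<sigma> eps_pos by simp
  next
    case False
    then have "dist z (1 + p) < s" using that \<sigma> by (simp add: dist_real_def)
    then have "\<bar>f z - f (1 + p)\<bar> < f (1 + p) - 1" using s(2) by (simp add: dist_real_def)
    then show ?thesis by (simp add: abs_less_iff)
  qed
  have ne: "{eps - \<sigma>..1 + p + \<sigma>} \<noteq> {}" using \<sigma> eps_less by simp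
  have "continuous_on {eps - \<sigma>..1 + p + \<sigma>} f" using isCont_f by (simp add: continuous_at_imp_continuous_on)
  then obtain z0 where z0: "z0 \<in> {eps - \<sigma>..1 + p + \<sigma>}" "\<forall>y\<in>{eps - \<sigma>..1 + p + \<sigma>}. f z0 \<le> f y"
    using continuous_attains_inf[OF compact_Icc ne] by blast
  have "\<exists>s l. 0 < s \<and> s < -p \<and> 1 < l \<and>
     (\<forall>z. eps - s \<le> z \<and> z \<le> 1 + p + s \<longrightarrow> l \<le> f z)"
    using \<sigma> z0 gt1 by (intro exI[of _ \<sigma>] exI[of _ "f z0"]) auto
  then have "\<exists>l. 0 < sig \<and> sig < -p \<and> 1 < l \<and>
     (\<forall>z. eps - sig \<le> z \<and> z \<le> 1 + p + sig \<longrightarrow> l \<le> f z)"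
    unfolding sig_def by (rule someI_ex)
  then have "0 < sig \<and> sig < -p \<and> 1 < lam \<and>
     (\<forall>z. eps - sig \<le> z \<and> z \<le> 1 + p + sig \<longrightarrow> lam \<le> f z)"
    unfolding lam_def by (rule someI_ex)
  then show "0 < sig" "sig < -p" "1 < lam"
    "eps - sig \<le> z \<Longrightarrow> z \<le> 1 + p + sig \<Longrightarrow> lam \<le> f z" by auto
qed

lemma f_ge_lam:
  assumes "of_int m + eps - sig \<le> z" "z \<le> of_int m + 1 + p + sig"
  shows "lam \<le> f z"
  using f_ge_lam_base[of "z - of_int m"] f_add_of_int[of "z - of_int m" m] assms by simp

definition kap :: real where
  "kap = (SOME k. 0 < k \<and> (\<forall>z. 0 \<le> z \<and> z \<le> 1 + p \<longrightarrow> 1 + k * z \<le> f z))"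

lemma kap_pos: "0 < kap" and f_ge_1_plus_kap_base: "0 \<le> z \<Longrightarrow> z \<le> 1 + p \<Longrightarrow> 1 + kap * z \<le> f z"
proof -
  define c where "c = min e0 (1 + p)"
  have c: "0 < c" "c \<le> 1 + p" "c \<le> e0" using e0_pos p_gt by (auto simp: c_def)
  have ne: "{c..1 + p} \<noteq> {}" using c by simp
  have "continuous_on {c..1 + p} f" using isCont_f by (simp add: continuous_at_imp_continuous_on)
  then obtain z0 where z0: "z0 \<in> {c..1 + p}" "\<forall>y\<in>{c..1 + p}. f z0 \<le> f y"
    using continuous_attains_inf[OF compact_Icc ne] by blast
  have "1 < f z0" using f_gt_1[of z0] z0(1) c by simp
  define k where "k = min (f2 0 / 2) (f z0 - 1)"
  have k: "0 < k" using \<open>1 < f z0\<close> f2_0 by (simp add: k_def)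
  have "1 + k * z \<le> f z" if "0 \<le> z" "z \<le> 1 + p" for z
  proof (cases "z \<le> c")
    case True
    have "k \<le> f2 0 / 2" unfolding k_def by (rule min.cobounded1)
    then have "k * z \<le> (f2 0 / 2) * z" using that by (intro mult_right_mono)
    then show ?thesis using f_ge_near_0[of z] True c that by linarith
  next
    case False
    have "k * z \<le> k * 1" using k that p_lt by (intro mult_left_mono) auto
    also have "\<dots> \<le> f z0 - 1" by (simp add: k_def)
    moreover have "f z0 \<le> f z" using z0(2) False that by auto
    ultimately show ?thesis by linarith
  qed
  then have "\<exists>k. 0 < k \<and> (\<forall>z. 0 \<le> z \<and> z \<le> 1 + p \<longrightarrow> 1 + k * z \<le> f z)" using k by blast
  then have "0 < kap \<and> (\<forall>z. 0 \<le> z \<and> z \<le> 1 + p \<longrightarrow> 1 + kap * z \<le> f z)"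
    unfolding kap_def by (rule someI_ex)
  then show "0 < kap" "0 \<le> z \<Longrightarrow> z \<le> 1 + p \<Longrightarrow> 1 + kap * z \<le> f z" by auto
qed

lemma f_ge_1_plus_kap:
  assumes "of_int m \<le> z" "z \<le> of_int m + 1 + p"
  shows "1 + kap * (z - of_int m) \<le> f z"
  using f_ge_1_plus_kap_base[of "z - of_int m"] f_add_of_int[of "z - of_int m" m] assms by simp

text \<open>The integer translates of the interior of \<open>W0\<close>, and the points whose orbit enters them;
  both lie in the basin.\<close>

definition trap :: "real set" where
  "trap = (\<Union>m::int. {of_int m + p <..< of_int m})"

definition trapped :: "real set" where
  "trapped = {z. \<exists>k. (G^^k) z \<in> trap}"

lemma trap_add_of_int: "z \<in> trap \<Longrightarrow> z + of_int m \<in> trap"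
proof -
  assume "z \<in> trap"
  then obtain m' :: int where "of_int m' + p < z" "z < of_int m'" unfolding trap_def by auto
  then have "z + of_int m \<in> {of_int (m' + m) + p <..< of_int (m' + m)}" by simp
  then show ?thesis unfolding trap_def by blast
qed

lemma trapped_add_of_int: "z \<in> trapped \<Longrightarrow> z + of_int m \<in> trapped"
proof -
  assume "z \<in> trapped"
  then obtain k where "(G^^k) z \<in> trap" by (auto simp: trapped_def)
  then have "(G^^k) z + of_int (m * d ^ k) \<in> trap" by (rule trap_add_of_int)
  then have "(G^^k) (z + of_int m) \<in> trap" by (simp only: iterate_add_of_int)
  then show ?thesis unfolding trapped_def by blast
qed

lemma trapped_if_iterate_trapped: "(G^^n) z \<in> trapped \<Longrightarrow> z \<in> trapped"
  by (auto simp: trapped_def funpow_add_apply)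

lemma open_trapped: "open trapped"
proof -
  have "trapped = (\<Union>k. (G^^k) -` trap)" unfolding trapped_def by auto
  moreover have "open ((G^^k) -` trap)" for k
    unfolding trap_def by (intro continuous_open_vimage open_UN isCont_iterate) auto
  ultimately show ?thesis by auto
qed

lemma trapped_borel: "trapped \<in> sets borel"
  using open_trapped by simp

lemma trap_free_interval_bound:
  assumes "u < v" "\<And>z. u < z \<Longrightarrow> z < v \<Longrightarrow> z \<notin> trap"
  shows "v \<le> of_int \<lfloor>u\<rfloor> + 1 + p"
proof (rule ccontr)
  define m where "m = \<lfloor>u\<rfloor> + 1"
  assume "\<not> v \<le> of_int \<lfloor>u\<rfloor> + 1 + p"
  then have v: "of_int m + p < v" by (simp add: m_def)
  have u: "u < of_int m" by (simp add: m_def)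
  define z where "z = (max u (of_int m + p) + min v (of_int m)) / 2"
  have "u < z" "z < v" "of_int m + p < z" "z < of_int m"
    using u v assms(1) p_lt by (auto simp: z_def)
  moreover have "z \<in> trap" using calculation unfolding trap_def by auto
  ultimately show False using assms(2) by blast
qed

text \<open>An interval disjoint from the trap lies in a single expanding region, where \<open>f \<ge> 1 + kap z\<close>;
  its length therefore grows at least quadratically.\<close>

lemma trap_free_interval_expands:
  assumes "u < v" "\<And>z. u < z \<Longrightarrow> z < v \<Longrightarrow> z \<notin> trap"
  shows "(v - u) + kap * (v - u)^2 / 4 \<le> G v - G u"
proof -
  define m where "m = \<lfloor>u\<rfloor>"
  have m: "of_int m \<le> u" "v \<le> of_int m + 1 + p"
    using trap_free_interval_bound[OF assms] by (auto simp: m_def)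
  define w where "w = (u + v) / 2"
  have w: "u < w" "w < v" using assms(1) by (auto simp: w_def)
  have "1 * (w - u) \<le> G w - G u"
  proof (rule G_diff_ge)
    fix \<xi> assume "u \<le> \<xi>" "\<xi> \<le> w"
    then show "1 \<le> f \<xi>"
      using f_ge_1_plus_kap[of m \<xi>] kap_pos m w mult_nonneg_nonneg[of kap "\<xi> - of_int m"] by linarith
  qed (use w in simp)
  then have left: "w - u \<le> G w - G u" by simp
  have "(1 + kap * ((v - u) / 2)) * (v - w) \<le> G v - G w"
  proof (rule G_diff_ge)
    fix \<xi> assume \<xi>: "w \<le> \<xi>" "\<xi> \<le> v"
    have "kap * ((v - u) / 2) \<le> kap * (\<xi> - of_int m)"
      using kap_pos m \<xi> by (intro mult_left_mono) (auto simp: w_def)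
    then show "1 + kap * ((v - u) / 2) \<le> f \<xi>" using f_ge_1_plus_kap[of m \<xi>] m \<xi> w by linarith
  qed (use w in simp)
  moreover have "(1 + kap * ((v - u) / 2)) * (v - w) = (v - w) + kap * (v - u)^2 / 4"
    unfolding w_def power2_eq_square by (simp add: field_simps)
  ultimately have "(v - w) + kap * (v - u)^2 / 4 \<le> G v - G w" by simp
  with left show ?thesis by simp
qed

lemma trapped_dense:
  assumes "u < v"
  obtains z where "u < z" "z < v" "z \<in> trapped"
proof (rule ccontr)
  note found = that
  assume "\<not> thesis"
  then have none: "z \<notin> trapped" if "u < z" "z < v" for z using found[OF that] by blast
  define l where "l k = (G^^k) v - (G^^k) u" for k
  have lt: "(G^^k) u < (G^^k) v" for k using iterate_strict_mono assms by simp
  have free: "z \<notin> trap" if "(G^^k) u < z" "z < (G^^k) v" for k z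
  proof -
    obtain y where y: "(G^^k) y = z" using iterate_surj by blast
    then have "u < y" "y < v" using that iterate_less_iff by auto
    then show "z \<notin> trap" using none y unfolding trapped_def by blast
  qed
  have step: "l k + kap * (l k)^2 / 4 \<le> l (Suc k)" for k
    using trap_free_interval_expands[OF lt[of k] free[of k]] by (simp add: l_def)
  have l0: "0 < l 0" using assms by (simp add: l_def)
  have mono: "l 0 \<le> l k" for k
  proof (induction k)
    case (Suc k)
    have "0 \<le> kap * (l k)^2 / 4" using kap_pos by simp
    then show ?case using step[of k] Suc by linarith
  qed simp
  define c where "c = kap * (l 0)^2 / 4"
  have lin: "l 0 + of_nat k * c \<le> l k" for k
  proof (induction k)
    case (Suc k)
    have "c \<le> kap * (l k)^2 / 4"
      unfolding c_def using kap_pos mono[of k] l0 by (intro divide_right_mono mult_left_mono power_mono) auto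
    then show ?case using step[of k] Suc by (simp add: distrib_right)
  qed simp
  have bounded: "l k \<le> 1" for k
    using trap_free_interval_bound[OF lt[of k] free[of k]] of_int_floor_le[of "(G^^k) u"] p_lt
    unfolding l_def by linarith
  have "0 < c" using kap_pos l0 by (simp add: c_def)
  then obtain k :: nat where "1 / c < of_nat k" using reals_Archimedean2 by blast
  then have "1 < of_nat k * c" using \<open>0 < c\<close> by (simp add: field_simps)
  then show False using lin[of k] bounded[of k] l0 by linarith
qed

subsection \<open>Bounded distortion\<close>

definition C_exc :: real where
  "C_exc = 2 * eps * exp (Lf * (2 * eps)) / min_step"

lemma C_exc_pos: "0 < C_exc"
  using eps_pos min_step_pos by (simp add: C_exc_def)

text \<open>Then each intermediate gap is comparable to the final gap times
  the displacement \<open>G^{i+1} \<alpha> - G^i \<alpha>\<close>, and these displacements telescope.\<close>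

context
  fixes \<alpha> \<beta> :: real and M :: nat
  assumes \<alpha>_pos: "0 < \<alpha>" and \<alpha>_le_\<beta>: "\<alpha> \<le> \<beta>" and \<beta>_end: "(G^^M) \<beta> \<le> 2 * eps"
    and \<alpha>_end: "eps/2 \<le> (G^^M) \<alpha>" and end_gap: "(G^^M) \<beta> - (G^^M) \<alpha> \<le> min_step"
begin

lemma excursion_below_end: "i \<le> M \<Longrightarrow> (G^^i) \<beta> \<le> (G^^M) \<beta>"
  using orbit_mono_below_e0[of \<beta> M i] \<alpha>_pos \<alpha>_le_\<beta> \<beta>_end eps_le_e0 by simp

lemma excursion_gap_grows: "i \<le> M \<Longrightarrow> \<beta> - \<alpha> \<le> (G^^i) \<beta> - (G^^i) \<alpha>"
proof (induction i)
  case (Suc i)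
  obtain \<xi> where \<xi>: "(G^^i) \<alpha> \<le> \<xi>" "\<xi> \<le> (G^^i) \<beta>"
      "(G^^1) ((G^^i) \<beta>) - (G^^1) ((G^^i) \<alpha>) = deriv_iter 1 \<xi> * ((G^^i) \<beta> - (G^^i) \<alpha>)"
    using iterate_MVT[OF iterate_mono[OF \<alpha>_le_\<beta>], of i 1] by blast
  have "\<xi> \<le> 2 * eps" using \<xi> excursion_below_end[of i] Suc.prems \<beta>_end by simp
  then have "1 \<le> deriv_iter 1 \<xi>"
    using f_ge_1_near_0[of \<xi>] \<xi> iterate_pos[OF \<alpha>_pos, of i] eps_le_e0 by (simp add: deriv_iter_def)
  then have "(G^^i) \<beta> - (G^^i) \<alpha> \<le> (G^^Suc i) \<beta> - (G^^Suc i) \<alpha>"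
    using \<xi>(3) iterate_mono[OF \<alpha>_le_\<beta>, of i] by (simp add: mult_le_cancel_right1)
  then show ?case using Suc by simp
qed simp

lemma excursion_interlace: "i \<le> M \<Longrightarrow> (G^^i) \<beta> \<le> (G^^Suc i) \<alpha>"
proof -
  assume i: "i \<le> M"
  have "(G^^M) \<alpha> \<le> 2 * eps" using iterate_mono[OF \<alpha>_le_\<beta>, of M] \<beta>_end by simp
  then have "(G^^M) \<beta> \<le> G ((G^^M) \<alpha>)"
    using G_minus_id_ge_min_step[OF \<alpha>_end] end_gap by simp
  moreover have "(G^^(M - i)) ((G^^i) \<beta>) = (G^^M) \<beta>" using i by (simp add: funpow_add_apply)
  moreover have "M - i + Suc i = Suc M" using i by simp
  then have "(G^^(M - i)) ((G^^Suc i) \<alpha>) = G ((G^^M) \<alpha>)"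
    using funpow_add_apply[where g = G and m = "M - i" and n = "Suc i" and x = \<alpha>] by simp
  ultimately show ?thesis by (metis iterate_le_iff)
qed

lemma excursion_term_bound:
  assumes i: "i < M"
  shows "((G^^i) \<beta> - (G^^i) \<alpha>) * min_step
    \<le> exp (Lf * (2 * eps)) * ((G^^M) \<beta> - (G^^M) \<alpha>) * ((G^^Suc i) \<alpha> - (G^^i) \<alpha>)"
proof -
  define u v w where "u = (G^^i) \<alpha>" and "v = (G^^i) \<beta>" and "w = (G^^Suc i) \<alpha>"
  define N where "N = M - i"
  have uv: "u \<le> v" using iterate_mono[OF \<alpha>_le_\<beta>] by (simp add: u_def v_def)
  have vw: "v \<le> w" using excursion_interlace[of i] i by (simp add: v_def w_def)
  have "N + Suc i = Suc M" using i by (simp add: N_def)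
  then have N: "(G^^N) u = (G^^M) \<alpha>" "(G^^N) v = (G^^M) \<beta>" "(G^^N) w = G ((G^^M) \<alpha>)"
    using i funpow_add_apply[where g = G and m = N and n = "Suc i" and x = \<alpha>] by (simp_all add: N_def u_def v_def w_def funpow_add_apply)
  obtain \<xi> where \<xi>: "u \<le> \<xi>" "\<xi> \<le> v" "(G^^N) v - (G^^N) u = deriv_iter N \<xi> * (v - u)"
    using iterate_MVT[OF uv] by blast
  have uw: "u \<le> w" using uv vw by simp
  obtain \<zeta> where \<zeta>: "u \<le> \<zeta>" "\<zeta> \<le> w" "(G^^N) w - (G^^N) u = deriv_iter N \<zeta> * (w - u)"
    using iterate_MVT[OF uw] by blast
  have "(G^^j) w = (G^^Suc (j + i)) \<alpha>" "(G^^j) u = (G^^(j + i)) \<alpha>" for j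
    by (simp_all only: u_def w_def funpow_add_apply add_Suc_right)
  then have "(\<Sum>j<N. (G^^j) w - (G^^j) u) = (\<Sum>j<N. (G^^Suc (j + i)) \<alpha> - (G^^(j + i)) \<alpha>)"
    by simp
  also have "\<dots> = (G^^M) \<alpha> - (G^^i) \<alpha>"
    using sum_lessThan_telescope[of "\<lambda>j. (G^^(j + i)) \<alpha>" N] i by (simp add: N_def)
  also have "\<dots> \<le> 2 * eps"
    using iterate_mono[OF \<alpha>_le_\<beta>, of M] \<beta>_end iterate_pos[OF \<alpha>_pos, of i] by simp
  finally have "exp (Lf * (\<Sum>j<N. (G^^j) w - (G^^j) u)) \<le> exp (Lf * (2 * eps))"
    using Lf_pos by (simp add: mult_left_mono)
  then have "exp (Lf * (\<Sum>j<N. (G^^j) w - (G^^j) u)) * deriv_iter N \<xi> \<le> exp (Lf * (2 * eps)) * deriv_iter N \<xi>"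
    using deriv_iter_pos[of N \<xi>] by (intro mult_right_mono) auto
  with deriv_iter_distortion[of u \<zeta> w \<xi> N] \<zeta> \<xi> vw
  have distortion: "deriv_iter N \<zeta> \<le> exp (Lf * (2 * eps)) * deriv_iter N \<xi>" by simp
  have "min_step \<le> (G^^N) w - (G^^N) u"
    using N G_minus_id_ge_min_step[OF \<alpha>_end] iterate_mono[OF \<alpha>_le_\<beta>, of M] \<beta>_end by simp
  also have "\<dots> = deriv_iter N \<zeta> * (w - u)" by (rule \<zeta>(3))
  also have "\<dots> \<le> (exp (Lf * (2 * eps)) * deriv_iter N \<xi>) * (w - u)"
    using distortion by (rule mult_right_mono) (use uw in simp)
  finally have "(v - u) * min_step \<le> (v - u) * ((exp (Lf * (2 * eps)) * deriv_iter N \<xi>) * (w - u))"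
    using uv by (intro mult_left_mono) auto
  also have "\<dots> = exp (Lf * (2 * eps)) * (deriv_iter N \<xi> * (v - u)) * (w - u)" by (simp add: algebra_simps)
  finally show ?thesis using \<xi>(3) N by (simp add: u_def v_def w_def)
qed

lemma excursion_sum_bound: "(\<Sum>i<M. (G^^i) \<beta> - (G^^i) \<alpha>) \<le> C_exc * ((G^^M) \<beta> - (G^^M) \<alpha>)"
proof -
  define E l where "E = exp (Lf * (2 * eps))" and "l = (G^^M) \<beta> - (G^^M) \<alpha>"
  have "(\<Sum>i<M. (G^^i) \<beta> - (G^^i) \<alpha>) * min_step = (\<Sum>i<M. ((G^^i) \<beta> - (G^^i) \<alpha>) * min_step)"
    by (simp add: sum_distrib_right)
  also have "\<dots> \<le> (\<Sum>i<M. E * l * ((G^^Suc i) \<alpha> - (G^^i) \<alpha>))"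
    using excursion_term_bound by (intro sum_mono) (simp add: E_def l_def)
  also have "\<dots> = E * l * ((G^^M) \<alpha> - \<alpha>)"
    using sum_lessThan_telescope[of "\<lambda>i. (G^^i) \<alpha>" M] by (simp add: sum_distrib_left[symmetric])
  also have "\<dots> \<le> E * l * (2 * eps)"
    using iterate_mono[OF \<alpha>_le_\<beta>, of M] \<beta>_end \<alpha>_pos by (intro mult_left_mono) (auto simp: E_def l_def)
  finally show ?thesis using min_step_pos by (simp add: C_exc_def E_def l_def field_simps)
qed

end

lemma G_near_int:
  assumes "0 < frac z" "frac z < eps"
  shows "\<lfloor>G z\<rfloor> = \<lfloor>z\<rfloor> * d" "frac (G z) = G (frac z)"
proof -
  have "0 < G (frac z)" using iterate_pos[OF assms(1), of 1] by simp
  moreover have "G (frac z) < 1" using G_le_three_halves_eps[of "frac z"] assms eps_less_eighth by simp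
  moreover have G: "G z = G (frac z) + of_int (\<lfloor>z\<rfloor> * d)"
    using G_add_of_int[of "frac z" "\<lfloor>z\<rfloor>"] by (simp add: frac_def)
  ultimately show floor: "\<lfloor>G z\<rfloor> = \<lfloor>z\<rfloor> * d" by (intro floor_unique) auto
  show "frac (G z) = G (frac z)" using G floor by (simp add: frac_def)
qed

lemma G_diff_of_int: "G (w - of_int m) = G w - of_int (m * d)"
  using G_add_of_int[of "w - of_int m" m] by simp

text \<open>While the orbit of \<open>x\<close> stays within \<open>eps\<close> to the right of the integers, its integer part
  is multiplied by \<open>d\<close> at each step, so any orbit can be reduced by these integers.\<close>

lemma orbit_reduction:
  assumes "\<And>j. s \<le> j \<Longrightarrow> j < s + i \<Longrightarrow> 0 < frac ((G^^j) x) \<and> frac ((G^^j) x) < eps"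
  shows "(G^^(s + i)) y - of_int \<lfloor>(G^^(s + i)) x\<rfloor> = (G^^i) ((G^^s) y - of_int \<lfloor>(G^^s) x\<rfloor>)"
  using assms
proof (induction i)
  case (Suc i)
  have "\<lfloor>(G^^(s + Suc i)) x\<rfloor> = \<lfloor>(G^^(s + i)) x\<rfloor> * d"
    using G_near_int(1)[of "(G^^(s + i)) x"] Suc.prems[of "s + i"] by simp
  then have "(G^^(s + Suc i)) y - of_int \<lfloor>(G^^(s + Suc i)) x\<rfloor>
      = G ((G^^(s + i)) y - of_int \<lfloor>(G^^(s + i)) x\<rfloor>)"
    using G_diff_of_int[of "(G^^(s + i)) y" "\<lfloor>(G^^(s + i)) x\<rfloor>"] by simp
  also have "\<dots> = G ((G^^i) ((G^^s) y - of_int \<lfloor>(G^^s) x\<rfloor>))" using Suc by simp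
  finally show ?case by simp
qed simp

definition l_max :: real where "l_max = min (min min_step (eps/2)) (sig/2)"
definition rho :: real where "rho = l_max / 2"
definition C_ret :: real where "C_ret = (1 + C_exc * lam) / (lam - 1)"

lemma l_max_pos: "0 < l_max"
  and l_max_le: "l_max \<le> min_step" "l_max \<le> eps/2" "l_max \<le> sig/2"
  using min_step_pos eps_pos sig_pos by (auto simp: l_max_def)

lemma rho_pos: "0 < rho" and rho_less: "rho < eps" "rho < -p"
  using l_max_pos l_max_le eps_pos sig_less sig_pos by (auto simp: rho_def)

lemma two_rho: "2 * rho = l_max"
  by (simp add: rho_def)

lemma C_exc_eq: "C_exc = C_ret - (1 + C_ret) / lam"
proof -
  have "C_ret * (1 - 1 / lam) = 1 / lam + C_exc"
    using lam_gt_1 by (simp add: C_ret_def field_simps)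
  then show ?thesis using lam_gt_1 by (simp add: field_simps)
qed

lemma C_ret_pos: "0 < C_ret"
proof -
  have "0 < C_exc * lam" using C_exc_pos lam_gt_1 by simp
  then show ?thesis using lam_gt_1 by (simp add: C_ret_def)
qed

text \<open>One step of the induction over returns: a return at which the window has length \<open>Lk\<close>
  is followed by an excursion of total length \<open>S1\<close>, ending at the next return with length \<open>L'\<close>.\<close>

lemma return_step_bound:
  assumes "lam * Lk \<le> L1" "L1 \<le> L'" "0 \<le> Lk" "L' \<le> 2 * rho"
    and "S1 \<le> C_exc * L'" "S2 \<le> C_ret * (2 * rho - L')"
  shows "Lk \<le> 2 * rho" "Lk + S1 + S2 \<le> C_ret * (2 * rho - Lk)"
proof -
  have Lk: "Lk \<le> L' / lam" using assms(1,2) lam_gt_1 by (simp add: pos_le_divide_eq mult.commute)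
  have "0 \<le> lam * Lk" using assms(3) lam_gt_1 by simp
  then have "0 \<le> L'" using assms(1,2) by linarith
  then have "L' / lam \<le> L'" using lam_gt_1 by (simp add: divide_le_eq mult_le_cancel_left1)
  with Lk
  show "Lk \<le> 2 * rho" using assms(4) by simp
  have "(1 + C_ret) * Lk \<le> (1 + C_ret) * (L' / lam)"
    using Lk C_ret_pos by (intro mult_left_mono) auto
  moreover have "Lk + C_exc * L' + C_ret * (2 * rho - L')
      = C_ret * (2 * rho - Lk) + ((1 + C_ret) * Lk - (1 + C_ret) * (L' / lam))"
    unfolding C_exc_eq using lam_gt_1 by (simp add: field_simps)
  ultimately show "Lk + S1 + S2 \<le> C_ret * (2 * rho - Lk)" using assms(5,6) by linarith
qed

lemma trapped_uniform_subintervals: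
  fixes N :: nat and u v :: "nat \<Rightarrow> real"
  assumes "\<And>i. i \<le> N \<Longrightarrow> u i < v i"
  obtains w z where "0 < w" "\<And>i. i \<le> N \<Longrightarrow> {z i - w .. z i + w} \<subseteq> trapped"
    "\<And>i. i \<le> N \<Longrightarrow> u i \<le> z i - w \<and> z i + w \<le> v i"
proof -
  define P where "P i wz \<longleftrightarrow> 0 < fst wz \<and> {snd wz - fst wz .. snd wz + fst wz} \<subseteq> trapped \<and>
      u i \<le> snd wz - fst wz \<and> snd wz + fst wz \<le> v i" for i and wz :: "real \<times> real"
  have "\<exists>wz. P i wz" if i: "i \<le> N" for i
  proof -
    obtain z where z: "u i < z" "z < v i" "z \<in> trapped"
      using trapped_dense[OF assms[OF i]] by blast
    obtain e where e: "0 < e" "ball z e \<subseteq> trapped" using open_trapped z(3) openE by blast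
    define w where "w = min (e/2) (min (z - u i) (v i - z))"
    have "{z - w .. z + w} \<subseteq> ball z e" using e(1) by (auto simp: w_def dist_real_def)
    then show ?thesis using e z by (intro exI[of _ "(w, z)"]) (auto simp: P_def w_def)
  qed
  then obtain F where F: "\<And>i. i \<le> N \<Longrightarrow> P i (F i)" using bchoice[of "{..N}" P] by auto
  define w where "w = Min ((fst \<circ> F) ` {..N})"
  have "w \<in> (fst \<circ> F) ` {..N}" unfolding w_def by (rule Min_in) auto
  then have w: "0 < w" using F by (auto simp: P_def)
  have w_le: "w \<le> fst (F i)" if "i \<le> N" for i unfolding w_def using that by (auto intro: Min_le)
  show ?thesis
  proof (rule that[of w "snd \<circ> F"])
    fix i assume "i \<le> N"
    then show "{(snd \<circ> F) i - w .. (snd \<circ> F) i + w} \<subseteq> trapped"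
      "u i \<le> (snd \<circ> F) i - w \<and> (snd \<circ> F) i + w \<le> v i"
      using F[of i] w_le[of i] by (force simp: P_def)+
  qed (rule w)
qed

text \<open>The trapped set is open, dense and \<open>1\<close>-periodic, hence it has measure bounded below
  uniformly in every window of radius \<open>rho\<close> centred in the expanding region.\<close>

definition eta :: real where
  "eta = (SOME e. 0 < e \<and> (\<forall>c (m::int). eps \<le> c \<and> c \<le> 1 + p \<longrightarrow>
     ennreal e \<le> emeasure lborel (trapped \<inter> {of_int m + c - rho .. of_int m + c + rho})))"

lemma eta_pos: "0 < eta"
  and trapped_window_measure: "eps \<le> c \<Longrightarrow> c \<le> 1 + p \<Longrightarrow>
    ennreal eta \<le> emeasure lborel (trapped \<inter> {of_int m + c - rho .. of_int m + c + rho})"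
proof -
  define h where "h = rho / 2"
  have h: "0 < h" using rho_pos by (simp add: h_def)
  define N where "N = nat \<lceil>(1 + p - eps) / h\<rceil>"
  define center where "center i = eps + of_nat i * h" for i :: nat
  obtain w z where w: "0 < w" and z: "\<And>i. i \<le> N \<Longrightarrow> {z i - w .. z i + w} \<subseteq> trapped"
      "\<And>i. i \<le> N \<Longrightarrow> center i - h \<le> z i - w \<and> z i + w \<le> center i + h"
    using trapped_uniform_subintervals[of N "\<lambda>i. center i - h" "\<lambda>i. center i + h"] h by auto
  have "ennreal (2 * w) \<le> emeasure lborel (trapped \<inter> {of_int m + c - rho .. of_int m + c + rho})"
    if c: "eps \<le> c" "c \<le> 1 + p" for c and m :: int
  proof -
    define i where "i = nat \<lfloor>(c - eps) / h\<rfloor>"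
    have "of_nat i \<le> (c - eps) / h" "(c - eps) / h < of_nat i + 1" using c h by (simp_all add: i_def)
    then have ci: "center i \<le> c" "c < center i + h" using h by (simp_all add: center_def field_simps)
    have "(c - eps) / h \<le> (1 + p - eps) / h" using c h by (simp add: divide_right_mono)
    then have "\<lfloor>(c - eps) / h\<rfloor> \<le> \<lceil>(1 + p - eps) / h\<rceil>"
      by (meson floor_le_ceiling floor_mono order_trans)
    then have iN: "i \<le> N" by (simp add: i_def N_def nat_mono)
    have "{z i + of_int m - w .. z i + of_int m + w} \<subseteq> trapped \<inter> {of_int m + c - rho .. of_int m + c + rho}"
    proof
      fix t assume t: "t \<in> {z i + of_int m - w .. z i + of_int m + w}"
      then have "t - of_int m \<in> trapped" using z(1)[OF iN] by auto
      then have "t \<in> trapped" using trapped_add_of_int[of "t - of_int m" m] by simp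
      moreover have "t \<in> {of_int m + c - rho .. of_int m + c + rho}"
        using t z(2)[OF iN] ci by (auto simp: h_def)
      ultimately show "t \<in> trapped \<inter> {of_int m + c - rho .. of_int m + c + rho}" by simp
    qed
    then have "emeasure lborel {z i + of_int m - w .. z i + of_int m + w}
        \<le> emeasure lborel (trapped \<inter> {of_int m + c - rho .. of_int m + c + rho})"
      by (rule emeasure_mono) (use trapped_borel in auto)
    then show ?thesis using w by simp
  qed
  then have "\<exists>e. 0 < e \<and> (\<forall>c (m::int). eps \<le> c \<and> c \<le> 1 + p \<longrightarrow>
      ennreal e \<le> emeasure lborel (trapped \<inter> {of_int m + c - rho .. of_int m + c + rho}))"
    using w by (intro exI[of _ "2 * w"]) auto
  then have "0 < eta \<and> (\<forall>c (m::int). eps \<le> c \<and> c \<le> 1 + p \<longrightarrow>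
      ennreal eta \<le> emeasure lborel (trapped \<inter> {of_int m + c - rho .. of_int m + c + rho}))"
    unfolding eta_def by (rule someI_ex)
  then show "0 < eta" "eps \<le> c \<Longrightarrow> c \<le> 1 + p \<Longrightarrow>
      ennreal eta \<le> emeasure lborel (trapped \<inter> {of_int m + c - rho .. of_int m + c + rho})" by auto
qed

definition C_dist :: real where "C_dist = exp (Lf * (2 * rho * (C_exc + C_ret)))"

definition c_dens :: real where "c_dens = min (eta / (2 * rho * C_dist^2)) 1"
definition theta :: real where "theta = 1 - c_dens / 4"

lemma c_dens_pos: "0 < c_dens"
  using eta_pos rho_pos by (simp add: c_dens_def C_dist_def)

lemma theta_nonneg: "0 \<le> theta" and theta_less_1: "theta < 1"
  using c_dens_pos by (auto simp: theta_def c_dens_def)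

text \<open>The window \<open>[a, b]\<close> is mapped by \<open>G^n\<close> onto the interval of radius \<open>rho\<close> around \<open>G^n x\<close>,
  at a time \<open>n\<close> when the orbit of \<open>x\<close> is in the expanding region. Its images expand by \<open>lam\<close>
  at the visits to the expanding region and are controlled by \<open>excursion_sum_bound\<close> in between,
  which bounds their total length and hence the distortion of \<open>G^n\<close> on \<open>[a, b]\<close>.\<close>

context
  fixes x a b :: real and n :: nat
  assumes orbit: "\<And>k. 0 < frac ((G^^k) x) \<and> frac ((G^^k) x) \<le> 1 + p"
    and return_n: "eps \<le> frac ((G^^n) x)"
    and a_end: "(G^^n) a = (G^^n) x - rho" and b_end: "(G^^n) b = (G^^n) x + rho"
begin

lemma window_ends: "a < x" "x < b"
proof -
  have "(G^^n) a < (G^^n) x" "(G^^n) x < (G^^n) b" using a_end b_end rho_pos by auto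
  then show "a < x" "x < b" using iterate_less_iff by auto
qed

lemma window_order: "(G^^j) a \<le> (G^^j) x" "(G^^j) x \<le> (G^^j) b"
  using window_ends iterate_mono less_imp_le by blast+

lemma window_iterate_no_int:
  assumes "j \<le> n" "(G^^j) a \<le> of_int m" "of_int m \<le> (G^^j) b"
  shows False
proof -
  have "(G^^(n - j)) ((G^^j) a) = (G^^n) a" using assms(1) by (simp add: funpow_add_apply)
  moreover have "(G^^(n - j)) ((G^^j) b) = (G^^n) b" using assms(1) by (simp add: funpow_add_apply)
  ultimately have h: "(G^^n) a \<le> of_int (m * d ^ (n - j))" "of_int (m * d ^ (n - j)) \<le> (G^^n) b"
    using iterate_mono[OF assms(2), of "n - j"] iterate_mono[OF assms(3), of "n - j"]
      iterate_of_int[of "n - j" m] by auto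
  define X where "X = (G^^n) x"
  have X: "X = of_int \<lfloor>X\<rfloor> + frac X" by (simp add: frac_def)
  have l: "of_int \<lfloor>X\<rfloor> < X - rho" using return_n rho_less(1) X by (simp add: X_def)
  have r: "X + rho < of_int \<lfloor>X\<rfloor> + 1" using orbit[of n] rho_less(2) X by (simp add: X_def)
  have "of_int \<lfloor>X\<rfloor> < (of_int (m * d ^ (n - j)) :: real)" using h l a_end by (simp add: X_def)
  then have i1: "\<lfloor>X\<rfloor> < m * d ^ (n - j)" by linarith
  have "(of_int (m * d ^ (n - j)) :: real) < of_int \<lfloor>X\<rfloor> + 1" using h r b_end by (simp add: X_def)
  then have i2: "m * d ^ (n - j) < \<lfloor>X\<rfloor> + 1" by linarith
  show False using i1 i2 by simp
qed

lemma window_floor: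
  assumes "j \<le> n"
  shows "of_int \<lfloor>(G^^j) x\<rfloor> < (G^^j) a" "(G^^j) b < of_int \<lfloor>(G^^j) x\<rfloor> + 1"
proof -
  show "of_int \<lfloor>(G^^j) x\<rfloor> < (G^^j) a"
  proof (rule ccontr)
    assume "\<not> ?thesis"
    then have "(G^^j) a \<le> of_int \<lfloor>(G^^j) x\<rfloor>" by simp
    moreover have "of_int \<lfloor>(G^^j) x\<rfloor> \<le> (G^^j) b"
      using window_order(2)[of j] of_int_floor_le[of "(G^^j) x"] by linarith
    ultimately show False using window_iterate_no_int[OF assms] by blast
  qed
  show "(G^^j) b < of_int \<lfloor>(G^^j) x\<rfloor> + 1"
  proof (rule ccontr)
    assume "\<not> ?thesis"
    then have "of_int (\<lfloor>(G^^j) x\<rfloor> + 1) \<le> (G^^j) b" by simp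
    moreover have "(G^^j) a \<le> of_int \<lfloor>(G^^j) x\<rfloor> + 1"
      using window_order(1)[of j] real_of_int_floor_add_one_gt[of "(G^^j) x"] by linarith
    then have "(G^^j) a \<le> of_int (\<lfloor>(G^^j) x\<rfloor> + 1)" by simp
    ultimately show False using window_iterate_no_int[OF assms] by blast
  qed
qed

lemma first_return:
  assumes "k \<le> n"
  obtains r where "k \<le> r" "r \<le> n" "eps \<le> frac ((G^^r) x)"
    "\<And>i. k \<le> i \<Longrightarrow> i < r \<Longrightarrow> frac ((G^^i) x) < eps"
proof -
  define P where "P j \<longleftrightarrow> k \<le> j \<and> eps \<le> frac ((G^^j) x)" for j
  have "P n" using assms return_n by (simp add: P_def)
  then have "P (LEAST j. P j)" "(LEAST j. P j) \<le> n" by (auto intro: LeastI Least_le)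
  moreover have "frac ((G^^i) x) < eps" if "k \<le> i" "i < (LEAST j. P j)" for i
    using not_less_Least[OF that(2)] that(1) by (simp add: P_def)
  ultimately show ?thesis using that by (auto simp: P_def)
qed

lemma excursion_end:
  assumes sk: "s < k'" and kn: "k' \<le> n" and btw: "\<And>i. s \<le> i \<Longrightarrow> i < k' \<Longrightarrow> frac ((G^^i) x) < eps"
    and Rk: "eps \<le> frac ((G^^k') x)" and lk: "(G^^k') b - (G^^k') a \<le> l_max"
  shows "(G^^k') b - of_int \<lfloor>(G^^k') x\<rfloor> \<le> 2 * eps" "eps / 2 \<le> (G^^k') a - of_int \<lfloor>(G^^k') x\<rfloor>"
proof -
  define X where "X = (G^^k') x"
  obtain j where j: "k' = Suc j" "s \<le> j" using sk by (cases k') auto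
  have y: "0 < frac ((G^^j) x)" "frac ((G^^j) x) < eps" using orbit btw[of j] j by auto
  have "frac X = G (frac ((G^^j) x))" using G_near_int(2)[OF y] j by (simp add: X_def)
  also have "\<dots> \<le> 3/2 * eps" using G_le_three_halves_eps[of "frac ((G^^j) x)"] y by simp
  finally have "frac X \<le> 3/2 * eps" .
  moreover have "(G^^k') a \<le> X" "X \<le> (G^^k') b" using window_order[of k'] by (auto simp: X_def)
  moreover have "X = of_int \<lfloor>X\<rfloor> + frac X" by (simp add: frac_def)
  ultimately show "(G^^k') b - of_int \<lfloor>(G^^k') x\<rfloor> \<le> 2 * eps" "eps / 2 \<le> (G^^k') a - of_int \<lfloor>(G^^k') x\<rfloor>"
    using Rk lk l_max_le(2) by (simp_all add: X_def)
qed

lemma excursion_bound: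
  assumes sk: "s \<le> k'" and kn: "k' \<le> n" and btw: "\<And>i. s \<le> i \<Longrightarrow> i < k' \<Longrightarrow> frac ((G^^i) x) < eps"
    and Rk: "eps \<le> frac ((G^^k') x)" and lk: "(G^^k') b - (G^^k') a \<le> l_max"
  shows "(\<Sum>i\<in>{s..<k'}. (G^^i) b - (G^^i) a) \<le> C_exc * ((G^^k') b - (G^^k') a)"
    "(G^^s) b - (G^^s) a \<le> (G^^k') b - (G^^k') a"
proof -
  have "(\<Sum>i\<in>{s..<k'}. (G^^i) b - (G^^i) a) \<le> C_exc * ((G^^k') b - (G^^k') a) \<and>
      (G^^s) b - (G^^s) a \<le> (G^^k') b - (G^^k') a" (is "?sum \<and> ?grows")
  proof (cases "s = k'")
    case True
    then show ?thesis using window_order[of k'] C_exc_pos by simp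
  next
    case False
    define M where "M = k' - s"
    define \<alpha> where "\<alpha> = (G^^s) a - of_int \<lfloor>(G^^s) x\<rfloor>"
    define \<beta> where "\<beta> = (G^^s) b - of_int \<lfloor>(G^^s) x\<rfloor>"
    have reduce: "(G^^(s + i)) y - of_int \<lfloor>(G^^(s + i)) x\<rfloor> = (G^^i) ((G^^s) y - of_int \<lfloor>(G^^s) x\<rfloor>)"
      if "i \<le> M" for i y
      using orbit btw that by (intro orbit_reduction) (auto simp: M_def)
    have gap: "(G^^(s + i)) b - (G^^(s + i)) a = (G^^i) \<beta> - (G^^i) \<alpha>" if "i \<le> M" for i
      using reduce[OF that, of a] reduce[OF that, of b] by (simp add: \<alpha>_def \<beta>_def)
    have k': "k' = s + M" using sk by (simp add: M_def)
    have \<alpha>_pos: "0 < \<alpha>" using window_floor(1)[of s] sk kn by (simp add: \<alpha>_def)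
    have \<alpha>_le_\<beta>: "\<alpha> \<le> \<beta>" using window_order[of s] by (simp add: \<alpha>_def \<beta>_def)
    have "s < k'" using sk False by simp
    note excursion_end[OF this kn btw Rk lk]
    then have ends: "(G^^M) \<beta> \<le> 2 * eps" "eps / 2 \<le> (G^^M) \<alpha>"
      using reduce[of M a] reduce[of M b] k' by (simp_all add: \<alpha>_def \<beta>_def)
    have end_gap: "(G^^M) \<beta> - (G^^M) \<alpha> = (G^^k') b - (G^^k') a"
      using gap[of M] k' by simp
    then have "(G^^M) \<beta> - (G^^M) \<alpha> \<le> min_step" using lk l_max_le(1) by simp
    note excursion = \<alpha>_pos \<alpha>_le_\<beta> ends this
    have sum: "(\<Sum>i<M. (G^^i) \<beta> - (G^^i) \<alpha>) \<le> C_exc * ((G^^k') b - (G^^k') a)"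
      using excursion_sum_bound[OF excursion] end_gap by simp
    have grows: "\<beta> - \<alpha> \<le> (G^^k') b - (G^^k') a"
      using excursion_gap_grows[OF excursion order_refl] end_gap by simp
    have "(\<Sum>i\<in>{s..<k'}. (G^^i) b - (G^^i) a) = (\<Sum>i<M. (G^^(s + i)) b - (G^^(s + i)) a)"
      by (simp add: sum.atLeastLessThan_shift_0[of _ s k'] M_def comp_def atLeast0LessThan add.commute)
    also have "\<dots> = (\<Sum>i<M. (G^^i) \<beta> - (G^^i) \<alpha>)" using gap by simp
    finally show ?thesis using sum grows by (simp add: \<alpha>_def \<beta>_def)
  qed
  then show ?sum ?grows by auto
qed

lemma expansion_step:
  assumes kn: "k < n" and Rk: "eps \<le> frac ((G^^k) x)"
    and small: "(G^^Suc k) b - (G^^Suc k) a < lam * sig / 2"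
  shows "lam * ((G^^k) b - (G^^k) a) \<le> (G^^Suc k) b - (G^^Suc k) a"
proof -
  define X A B where "X = (G^^k) x" and "A = (G^^k) a" and "B = (G^^k) b"
  have AXB: "A \<le> X" "X \<le> B" using window_order[of k] by (auto simp: A_def B_def X_def)
  have expanding: "lam \<le> f \<xi>" if "X - sig/2 \<le> \<xi>" "\<xi> \<le> X + sig/2" for \<xi>
    using f_ge_lam[of "\<lfloor>X\<rfloor>" \<xi>] that Rk orbit[of k] by (simp add: X_def frac_def)
  have GBA: "G B - G A < lam * (sig / 2)" using small by (simp add: A_def B_def)
  have "X - A < sig / 2"
  proof (rule ccontr)
    assume "\<not> ?thesis"
    then have "lam * (sig / 2) \<le> G X - G (X - sig / 2)"
      using G_diff_ge[of "X - sig / 2" X lam] expanding sig_pos by simp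
    also have "\<dots> \<le> G B - G A" using AXB \<open>\<not> X - A < sig / 2\<close> G_mono by (simp add: diff_mono)
    finally show False using GBA by simp
  qed
  moreover have "B - X < sig / 2"
  proof (rule ccontr)
    assume "\<not> ?thesis"
    then have "lam * (sig / 2) \<le> G (X + sig / 2) - G X"
      using G_diff_ge[of X "X + sig / 2" lam] expanding sig_pos by simp
    also have "\<dots> \<le> G B - G A" using AXB \<open>\<not> B - X < sig / 2\<close> G_mono by (simp add: diff_mono)
    finally show False using GBA by simp
  qed
  ultimately have "lam * (B - A) \<le> G B - G A"
    using AXB expanding by (intro G_diff_ge) auto
  then show ?thesis by (simp add: A_def B_def)
qed

lemma return_sum_bound:
  assumes "k \<le> n" "eps \<le> frac ((G^^k) x)"
  shows "(G^^k) b - (G^^k) a \<le> 2 * rho \<and>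
         (\<Sum>j\<in>{k..<n}. (G^^j) b - (G^^j) a) \<le> C_ret * (2 * rho - ((G^^k) b - (G^^k) a))"
  using assms
proof (induction "n - k" arbitrary: k rule: less_induct)
  case less
  show ?case
  proof (cases "k = n")
    case True
    then show ?thesis using a_end b_end by simp
  next
    case False
    then have kn: "k < n" using less.prems by simp
    obtain k' where kk': "Suc k \<le> k'" "eps \<le> frac ((G^^k') x)" and k'n: "k' \<le> n"
        and btw: "\<And>i. Suc k \<le> i \<Longrightarrow> i < k' \<Longrightarrow> frac ((G^^i) x) < eps"
      using first_return[of "Suc k"] kn by auto
    define L' Lk L1 where "L' = (G^^k') b - (G^^k') a" and "Lk = (G^^k) b - (G^^k) a"
      and "L1 = (G^^Suc k) b - (G^^Suc k) a"
    define S1 S2 where "S1 = (\<Sum>j\<in>{Suc k..<k'}. (G^^j) b - (G^^j) a)"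
      and "S2 = (\<Sum>j\<in>{k'..<n}. (G^^j) b - (G^^j) a)"
    have IH: "L' \<le> 2 * rho" "S2 \<le> C_ret * (2 * rho - L')"
      using less.hyps[of k'] kk' k'n by (simp_all add: L'_def S2_def)
    then have "L' \<le> l_max" using two_rho by simp
    then have excursion: "S1 \<le> C_exc * L'" "L1 \<le> L'"
      using excursion_bound[of "Suc k" k', OF _ k'n btw kk'(2)] kk' by (simp_all add: S1_def L1_def L'_def)
    have "sig / 2 < lam * sig / 2" using sig_pos lam_gt_1 by simp
    then have "L1 < lam * sig / 2" using excursion(2) \<open>L' \<le> l_max\<close> l_max_le(3) by linarith
    then have "lam * Lk \<le> L1" using expansion_step[OF kn less.prems(2)] by (simp add: Lk_def L1_def)
    moreover have "0 \<le> Lk" using window_order[of k] by (simp add: Lk_def)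
    ultimately have "Lk \<le> 2 * rho" "Lk + S1 + S2 \<le> C_ret * (2 * rho - Lk)"
      using return_step_bound excursion IH by blast+
    moreover have "(\<Sum>j\<in>{k..<n}. (G^^j) b - (G^^j) a) = Lk + S1 + S2"
      using kn kk' k'n by (simp add: Lk_def S1_def S2_def sum.atLeast_Suc_lessThan sum.atLeastLessThan_concat)
    ultimately show ?thesis by (simp add: Lk_def)
  qed
qed

lemma window_lengths_sum: "(\<Sum>j<n. (G^^j) b - (G^^j) a) \<le> 2 * rho * (C_exc + C_ret)"
proof -
  obtain r where rn: "r \<le> n" and Pr: "eps \<le> frac ((G^^r) x)"
      and btw: "\<And>i. 0 \<le> i \<Longrightarrow> i < r \<Longrightarrow> frac ((G^^i) x) < eps"
    using first_return[of 0] by auto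
  have RI: "(G^^r) b - (G^^r) a \<le> 2 * rho \<and>
         (\<Sum>j\<in>{r..<n}. (G^^j) b - (G^^j) a) \<le> C_ret * (2 * rho - ((G^^r) b - (G^^r) a))"
    using return_sum_bound[OF rn Pr] .
  define Lr where "Lr = (G^^r) b - (G^^r) a"
  have Lr0: "0 \<le> Lr" using window_order[of r] by (simp add: Lr_def)
  have Lrl: "Lr \<le> l_max" using RI two_rho by (simp add: Lr_def)
  have E1: "(\<Sum>i\<in>{0..<r}. (G^^i) b - (G^^i) a) \<le> C_exc * Lr"
    using excursion_bound(1)[of 0 r, OF _ rn btw Pr] Lrl by (simp add: Lr_def)
  have "(\<Sum>j<n. (G^^j) b - (G^^j) a) = (\<Sum>j\<in>{0..<r}. (G^^j) b - (G^^j) a) + (\<Sum>j\<in>{r..<n}. (G^^j) b - (G^^j) a)"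
    using rn by (simp add: sum.atLeastLessThan_concat atLeast0LessThan[symmetric])
  also have "\<dots> \<le> C_exc * Lr + C_ret * (2 * rho - Lr)" using E1 RI by (simp add: Lr_def)
  also have "\<dots> \<le> C_exc * (2 * rho) + C_ret * (2 * rho)"
  proof -
    have "C_exc * Lr \<le> C_exc * (2 * rho)" using C_exc_pos RI by (intro mult_left_mono) (auto simp: Lr_def)
    moreover have "C_ret * (2 * rho - Lr) \<le> C_ret * (2 * rho)" using C_ret_pos Lr0 by (intro mult_left_mono) auto
    ultimately show ?thesis by simp
  qed
  finally show ?thesis by (simp add: algebra_simps)
qed

lemma window_distortion:
  assumes "a \<le> s" "s \<le> b" "a \<le> t" "t \<le> b"
  shows "deriv_iter n s \<le> C_dist * deriv_iter n t"
proof -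
  have "deriv_iter n s \<le> exp (Lf * (\<Sum>j<n. (G^^j) b - (G^^j) a)) * deriv_iter n t"
    by (rule deriv_iter_distortion[OF assms])
  also have "exp (Lf * (\<Sum>j<n. (G^^j) b - (G^^j) a)) \<le> C_dist"
    unfolding C_dist_def using window_lengths_sum Lf_pos by (simp add: mult_left_mono)
  then have "exp (Lf * (\<Sum>j<n. (G^^j) b - (G^^j) a)) * deriv_iter n t \<le> C_dist * deriv_iter n t"
    using deriv_iter_pos[of n t] by (intro mult_right_mono) auto
  finally show ?thesis .
qed

lemma window_length: "(b - a) * deriv_iter n x \<le> 2 * rho * C_dist"
proof -
  have ab: "a \<le> b" using window_ends by simp
  obtain \<xi> where xi: "a \<le> \<xi>" "\<xi> \<le> b" "(G^^n) b - (G^^n) a = deriv_iter n \<xi> * (b - a)"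
    using iterate_MVT[OF ab, where n = n] by blast
  have "deriv_iter n x \<le> C_dist * deriv_iter n \<xi>" using window_distortion[of x \<xi>] xi window_ends by simp
  then have "(b - a) * deriv_iter n x \<le> (b - a) * (C_dist * deriv_iter n \<xi>)" using ab by (intro mult_left_mono) auto
  also have "\<dots> = C_dist * (deriv_iter n \<xi> * (b - a))" by (simp add: algebra_simps)
  also have "\<dots> = C_dist * (2 * rho)" using xi(3) a_end b_end by simp
  finally show ?thesis by (simp add: algebra_simps)
qed

lemma window_trapped_measure: "ennreal eta \<le> ennreal (C_dist * deriv_iter n x) * emeasure lborel (trapped \<inter> {a..b})"
proof -
  have ab: "a \<le> b" using window_ends by simp
  define X where "X = (G^^n) x"
  have Xf: "X = of_int \<lfloor>X\<rfloor> + frac X" by (simp add: frac_def)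
  have c: "eps \<le> frac X" "frac X \<le> 1 + p" using return_n orbit[of n] by (auto simp: X_def)
  have "ennreal eta \<le> emeasure lborel (trapped \<inter> {of_int \<lfloor>X\<rfloor> + frac X - rho .. of_int \<lfloor>X\<rfloor> + frac X + rho})"
    by (rule trapped_window_measure[OF c])
  also have "{of_int \<lfloor>X\<rfloor> + frac X - rho .. of_int \<lfloor>X\<rfloor> + frac X + rho} = {(G^^n) a .. (G^^n) b}"
    using a_end b_end Xf by (simp add: X_def)
  also have "emeasure lborel (trapped \<inter> {(G^^n) a .. (G^^n) b}) \<le> ennreal (C_dist * deriv_iter n x) * emeasure lborel (trapped \<inter> {a..b})"
  proof (rule emeasure_interval_preimage_le[OF ab trapped_borel iterate_has_derivative isCont_deriv_iter])
    show "\<And>t. 0 \<le> deriv_iter n t" by (simp add: deriv_iter_pos less_imp_le)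
    show "\<And>t. (G^^n) t \<in> trapped \<Longrightarrow> t \<in> trapped" by (rule trapped_if_iterate_trapped)
    show "\<And>t. a \<le> t \<Longrightarrow> t \<le> b \<Longrightarrow> deriv_iter n t \<le> C_dist * deriv_iter n x"
      using window_distortion window_ends by (meson less_imp_le)
  qed
  finally show ?thesis .
qed

lemma window_trapped_density: "c_dens * (b - a) \<le> measure lborel (trapped \<inter> {a..b})"
proof -
  have ab: "a < b" using window_ends by simp
  have C_dist: "0 < C_dist" and D: "0 < deriv_iter n x" by (simp_all add: C_dist_def deriv_iter_pos)
  have "emeasure lborel (trapped \<inter> {a..b}) \<le> emeasure lborel {a..b}"
    by (rule emeasure_mono) auto
  then have "emeasure lborel (trapped \<inter> {a..b}) \<noteq> top"
    using ab by (metis emeasure_lborel_Icc_eq ennreal_neq_top top_unique)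
  then have "emeasure lborel (trapped \<inter> {a..b}) = ennreal (measure lborel (trapped \<inter> {a..b}))"
    by (rule emeasure_eq_ennreal_measure)
  then have "ennreal eta \<le> ennreal (C_dist * deriv_iter n x) * ennreal (measure lborel (trapped \<inter> {a..b}))"
    using window_trapped_measure by simp
  then have eta: "eta \<le> C_dist * deriv_iter n x * measure lborel (trapped \<inter> {a..b})"
    using C_dist D by (simp add: ennreal_mult[symmetric] ennreal_le_iff)
  have "c_dens * (b - a) \<le> eta / (2 * rho * C_dist^2) * (b - a)"
    using ab by (intro mult_right_mono) (auto simp: c_dens_def)
  also have "\<dots> \<le> measure lborel (trapped \<inter> {a..b})"
  proof -
    have "eta * (b - a) \<le> (C_dist * deriv_iter n x * measure lborel (trapped \<inter> {a..b})) * (b - a)"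
      using eta ab by (intro mult_right_mono) auto
    also have "\<dots> = C_dist * measure lborel (trapped \<inter> {a..b}) * ((b - a) * deriv_iter n x)"
      by (simp add: algebra_simps)
    also have "\<dots> \<le> C_dist * measure lborel (trapped \<inter> {a..b}) * (2 * rho * C_dist)"
      using window_length C_dist by (intro mult_left_mono) auto
    finally show ?thesis using rho_pos C_dist by (simp add: pos_divide_le_eq power2_eq_square algebra_simps)
  qed
  finally show ?thesis .
qed

end

lemma returns_to_expanding_region:
  assumes orbit: "\<And>k. 0 < frac ((G^^k) x) \<and> frac ((G^^k) x) \<le> 1 + p"
  obtains n where "N \<le> n" "eps \<le> frac ((G^^n) x)"
proof (rule ccontr)
  note found = that
  assume "\<not> thesis"
  then have near: "frac ((G^^n) x) < eps" if "N \<le> n" for n using found that by (meson not_le)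
  define y where "y = frac ((G^^N) x)"
  have iterate: "frac ((G^^(N + i)) x) = (G^^i) y" for i
  proof (induction i)
    case (Suc i)
    have "frac ((G^^(N + Suc i)) x) = G (frac ((G^^(N + i)) x))"
      using G_near_int(2)[of "(G^^(N + i)) x"] orbit near[of "N + i"] by simp
    then show ?case using Suc by simp
  qed (simp add: y_def)
  obtain i where "e0 < (G^^i) y" using orbit_leaves_right_nbhd[of y] orbit by (auto simp: y_def)
  moreover have "(G^^i) y < eps" using iterate[of i] near[of "N + i"] by simp
  ultimately show False using eps_le_e0 eps_pos by simp
qed

lemma deriv_iter_mono_along_orbit:
  assumes orbit: "\<And>k. 0 < frac ((G^^k) x) \<and> frac ((G^^k) x) \<le> 1 + p"
  shows "m \<le> n \<Longrightarrow> deriv_iter m x \<le> deriv_iter n x"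
proof (induction n)
  case (Suc n)
  show ?case
  proof (cases "m = Suc n")
    case False
    then have "deriv_iter m x \<le> deriv_iter n x" using Suc by simp
    also have "\<dots> \<le> deriv_iter n x * f ((G^^n) x)"
      using f_ge_1_if_frac[of "(G^^n) x"] orbit[of n] deriv_iter_pos[of n x] by (simp add: mult_le_cancel_left1)
    finally show ?thesis by (simp add: deriv_iter_Suc)
  qed simp
qed simp

lemma deriv_iter_unbounded:
  assumes orbit: "\<And>k. 0 < frac ((G^^k) x) \<and> frac ((G^^k) x) \<le> 1 + p"
  obtains n where "eps \<le> frac ((G^^n) x)" "lam ^ K \<le> deriv_iter n x"
proof -
  have "\<exists>n. eps \<le> frac ((G^^n) x) \<and> lam ^ K \<le> deriv_iter n x"
  proof (induction K)
    case 0
    obtain n where "eps \<le> frac ((G^^n) x)" using returns_to_expanding_region[OF orbit, of 0] by blast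
    moreover have "1 \<le> deriv_iter n x"
      using deriv_iter_mono_along_orbit[OF orbit, of 0 n] by (simp add: deriv_iter_def)
    ultimately show ?case by auto
  next
    case (Suc K)
    then obtain n where n: "eps \<le> frac ((G^^n) x)" "lam ^ K \<le> deriv_iter n x" by blast
    define X where "X = (G^^n) x"
    have "lam \<le> f X"
      using f_ge_lam[of "\<lfloor>X\<rfloor>" X] n(1) orbit[of n] sig_pos by (simp add: X_def frac_def)
    then have "lam ^ K * lam \<le> deriv_iter n x * f X"
      using n(2) lam_gt_1 deriv_iter_pos[of n x] by (intro mult_mono) auto
    then have "lam ^ Suc K \<le> deriv_iter (Suc n) x" by (simp add: deriv_iter_Suc X_def mult.commute)
    moreover obtain n' where "Suc n \<le> n'" "eps \<le> frac ((G^^n') x)"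
      using returns_to_expanding_region[OF orbit] by blast
    moreover have "deriv_iter (Suc n) x \<le> deriv_iter n' x"
      using deriv_iter_mono_along_orbit[OF orbit] calculation(2) by blast
    ultimately show ?case by (meson order_trans)
  qed
  then show ?thesis using that by blast
qed

text \<open>Pulling back windows along return times with large derivative gives arbitrarily small
  intervals around \<open>x\<close> in which the trapped set has relative measure at least \<open>c_dens\<close>.\<close>

lemma untrapped_density:
  assumes orbit: "\<And>k. 0 < frac ((G^^k) x) \<and> frac ((G^^k) x) \<le> 1 + p" and r0: "0 < r0"
  obtains r where "0 < r" "r < r0"
    "emeasure lborel (- trapped \<inter> ball x r) \<le> ennreal theta * emeasure lborel (ball x r)"
proof -
  obtain K where K: "4 * rho * C_dist / r0 < lam ^ K" using real_arch_pow[OF lam_gt_1] by blast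
  obtain n where n: "eps \<le> frac ((G^^n) x)" "lam ^ K \<le> deriv_iter n x"
    using deriv_iter_unbounded[OF orbit] by blast
  obtain a where a_end: "(G^^n) a = (G^^n) x - rho" using iterate_surj by blast
  obtain b where b_end: "(G^^n) b = (G^^n) x + rho" using iterate_surj by blast
  note window = orbit n(1) a_end b_end
  have ab: "a < x" "x < b" using window_ends[OF window] by auto
  have "4 * rho * C_dist < r0 * lam ^ K" using K r0 by (simp add: pos_divide_less_eq mult.commute)
  also have "\<dots> \<le> r0 * deriv_iter n x" using n(2) r0 by simp
  finally have "2 * (b - a) * deriv_iter n x < r0 * deriv_iter n x"
    using window_length[OF window] by linarith
  then have "2 * (b - a) < r0" using deriv_iter_pos[of n x] by simp
  moreover have "emeasure lborel (- trapped \<inter> ball x (2 * (b - a)))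
      \<le> ennreal theta * emeasure lborel (ball x (2 * (b - a)))"
    unfolding theta_def using emeasure_compl_ball_le[OF ab trapped_borel window_trapped_density[OF window]] .
  ultimately show ?thesis using that[of "2 * (b - a)"] ab by simp
qed

definition int_preimages :: "real set" where
  "int_preimages = {z. \<exists>k. (G^^k) z \<in> \<int>}"

lemma countable_int_preimages: "countable int_preimages"
proof -
  have "inj (G^^k)" for k
    by (rule strict_mono_imp_inj_on) (simp add: strict_mono_def iterate_strict_mono)
  then have "countable ((G^^k) -` {of_int m})" for k m
    by (intro countable_finite finite_vimageI) auto
  moreover have "int_preimages = (\<Union>k. \<Union>m::int. (G^^k) -` {of_int m})"
    by (auto simp: int_preimages_def elim!: Ints_cases) (metis Ints_of_int)
  ultimately show ?thesis by auto
qed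

lemma untrapped_orbit:
  assumes "x \<notin> trapped" "x \<notin> int_preimages"
  shows "0 < frac ((G^^k) x) \<and> frac ((G^^k) x) \<le> 1 + p"
proof
  show "0 < frac ((G^^k) x)"
    using assms(2) frac_ge_0[of "(G^^k) x"] by (auto simp: int_preimages_def less_le)
  show "frac ((G^^k) x) \<le> 1 + p"
  proof (rule ccontr)
    define X where "X = (G^^k) x"
    assume "\<not> ?thesis"
    then have "X \<in> {of_int (\<lfloor>X\<rfloor> + 1) + p <..< of_int (\<lfloor>X\<rfloor> + 1)}"
      using frac_lt_1[of X] by (simp add: X_def frac_def)
    then have "x \<in> trapped" unfolding trapped_def trap_def X_def by blast
    then show False using assms(1) by simp
  qed
qed

lemma untrapped_null: "- trapped \<in> null_sets lborel"
proof (rule null_sets_lborel_if_density_lt_1[OF _ countable_int_preimages theta_nonneg theta_less_1])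
  show "- trapped \<in> sets borel" using open_trapped by (simp add: borel_closed)
  show "\<exists>r. 0 < r \<and> r < r0 \<and> emeasure lborel (- trapped \<inter> ball x r) \<le> ennreal theta * emeasure lborel (ball x r)"
    if "x \<in> - trapped" "x \<notin> int_preimages" "0 < r0" for x r0
    using untrapped_density[OF untrapped_orbit] that by (metis ComplD)
qed

lemma trapped_subset_basin:
  assumes "{p<..0} \<subseteq> basin"
  shows "trapped \<subseteq> basin"
proof
  fix z assume "z \<in> trapped"
  then obtain k and m :: int where "of_int m + p < (G^^k) z" "(G^^k) z < of_int m"
    by (auto simp: trapped_def trap_def)
  then have "(G^^k) z - of_int m \<in> {p<..0}" by simp
  then have "(G^^k) z - of_int m + of_int m \<in> basin" using assms basin_add_of_int by blast
  then show "z \<in> basin" using basin_iterate_iff by simp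
qed

end

context saddle_node_lift
begin

lemma basin_complement_null:
  assumes expanding: "\<And>x. (\<forall>n::int. x - of_int n \<notin> W0) \<Longrightarrow> 1 < f x"
  shows "{0..<1} - basin \<in> null_sets lborel"
proof (cases "{0..<1} \<subseteq> basin")
  case True
  then have "{0..<1} - basin = {}" by blast
  then show ?thesis by (simp only: null_sets.empty_sets)
next
  case False
  then obtain z0 where "z0 \<in> {0..<1}" "z0 \<notin> basin" by blast
  then have z0: "0 \<le> z0" "z0 < 1" "z0 \<notin> basin" by auto
  obtain p where p: "-1 < p" "p < 0" "W0 = {p<..0}"
    using W0_eq_interval[OF expanding z0] by blast
  interpret expanding_saddle_node_lift G f f2 d p
    by (intro expanding_saddle_node_lift.intro saddle_node_lift_axioms expanding_saddle_node_lift_axioms.intro)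
      (use p expanding in auto)
  have "{0..<1} - basin \<subseteq> - trapped"
    using trapped_subset_basin W0_subset_basin p(3) by blast
  then show ?thesis
    by (rule null_sets_subset[OF untrapped_null, rotated]) (use basin_borel in auto)
qed

end

theorem theorem2p1:
  fixes F F1 F2 :: "real \<Rightarrow> real" and d :: int
  assumes lift: "\<And>x. F (x + 1) = F x + of_int d"
    and deriv1: "\<And>x. (F has_real_derivative F1 x) (at x)"
    and deriv2: "\<And>x. (F1 has_real_derivative F2 x) (at x)"
    and C2: "continuous_on UNIV F2"
    and local_diffeo: "\<And>x. F1 x \<noteq> 0"
    and fixed0: "F 0 \<in> \<int>"
    and sn1: "F1 0 = 1"
    and sn2: "F2 0 > 0"
    and unique_sn: "\<And>x. F x - x \<in> \<int> \<Longrightarrow> F1 x = 1 \<Longrightarrow> F2 x > 0 \<Longrightarrow> x \<in> \<int>"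
    and expanding: "\<And>x. (\<forall>n::int. x - of_int n \<notin> W0_lift F) \<Longrightarrow> \<bar>F1 x\<bar> > 1"
  shows "{0..<1} - basin0_lift F \<in> null_sets lborel"
proof -
  have F1_pos: "0 < F1 x" for x
    by (rule pos_if_continuous_nonzero) (use deriv2 DERIV_isCont local_diffeo sn1 in auto)
  obtain k0 :: int where k0: "F 0 = of_int k0" using fixed0 by (rule Ints_cases)
  define G where "G = (\<lambda>x. F x + of_int (- k0))"
  have basin: "basin0_lift G = basin0_lift F"
    unfolding G_def using lift by (rule basin0_lift_add_of_int)
  interpret saddle_node_lift G F1 F2 d
  proof
    show "G (x + 1) = G x + of_int d" for x using lift by (simp add: G_def)
    show "(G has_real_derivative F1 x) (at x)" for x
      using deriv1[of x] by (auto simp: G_def intro!: derivative_eq_intros)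
  qed (use deriv2 C2 F1_pos k0 sn1 sn2 in \<open>simp_all add: G_def\<close>)
  have "1 < F1 x" if "\<forall>n::int. x - of_int n \<notin> W0_lift G" for x
    using expanding[of x] that F1_pos[of x] by (simp add: W0_lift_def basin)
  then show ?thesis using basin_complement_null basin by simp
qed

end
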